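(* Let $G$ be a $(P_5, C_4)$-free graph and let $\ell \ge \chi(G)+1$ be an integer. Then $\mathcal{R}_\ell(G)$ is connected.
   Context: All graphs are finite and simple. A $k$-colouring of $G$ is a map $\alpha: V(G)\to\{1,\dots,k\}$ with $\alpha(u)\neq\alpha(v)$ for every edge $uv$; $\chi(G)$ is the chromatic number. The reconfiguration graph $\mathcal{R}_k(G)$ has the $k$-colourings of $G$ as vertices, two being adjacent if they differ on exactly one vertex. A graph is $(H_1,H_2)$-free if it has no induced subgraph isomorphic to $H_1$ or $H_2$; $P_5$ is the path on 5 vertices and $C_4$ the 4-cycle. *)

theory Defs
  imports Main "HOL-Library.FuncSet"
begin

definition simple_graph :: "'a set \<Rightarrow> 'a set set \<Rightarrow> bool" where
  "simple_graph V E \<longleftrightarrow> finite V \<and> (\<forall>e\<in>E. e \<subseteq> V \<and> card e = 2)"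

definition has_induced :: "'a set \<Rightarrow> 'a set set \<Rightarrow> nat \<Rightarrow> (nat \<Rightarrow> nat \<Rightarrow> bool) \<Rightarrow> bool" where
  "has_induced V E n H \<longleftrightarrow>
     (\<exists>f. inj_on f {0..<n} \<and> f ` {0..<n} \<subseteq> V \<and>
          (\<forall>i\<in>{0..<n}. \<forall>j\<in>{0..<n}. {f i, f j} \<in> E \<longleftrightarrow> H i j))"

definition P5_adj :: "nat \<Rightarrow> nat \<Rightarrow> bool" where
  "P5_adj i j \<longleftrightarrow> i + 1 = j \<or> j + 1 = i"

definition C4_adj :: "nat \<Rightarrow> nat \<Rightarrow> bool" where
  "C4_adj i j \<longleftrightarrow> (i + 1) mod 4 = j \<or> (j + 1) mod 4 = i"

definition P5_C4_free :: "'a set \<Rightarrow> 'a set set \<Rightarrow> bool" where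
  "P5_C4_free V E \<longleftrightarrow> \<not> has_induced V E 5 P5_adj \<and> \<not> has_induced V E 4 C4_adj"

definition colourings :: "'a set \<Rightarrow> 'a set set \<Rightarrow> nat \<Rightarrow> ('a \<Rightarrow> nat) set" where
  "colourings V E k = {\<alpha> \<in> V \<rightarrow>\<^sub>E {1..k}. \<forall>u\<in>V. \<forall>v\<in>V. {u, v} \<in> E \<longrightarrow> \<alpha> u \<noteq> \<alpha> v}"

definition chromatic_number :: "'a set \<Rightarrow> 'a set set \<Rightarrow> nat" where
  "chromatic_number V E = (LEAST k. colourings V E k \<noteq> {})"

definition recolour_adj :: "'a set \<Rightarrow> ('a \<Rightarrow> nat) \<Rightarrow> ('a \<Rightarrow> nat) \<Rightarrow> bool" where
  "recolour_adj V \<alpha> \<beta> \<longleftrightarrow> card {v \<in> V. \<alpha> v \<noteq> \<beta> v} = 1"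

definition reconf_connected :: "'a set \<Rightarrow> 'a set set \<Rightarrow> nat \<Rightarrow> bool" where
  "reconf_connected V E k \<longleftrightarrow>
     (\<forall>\<alpha>\<in>colourings V E k. \<forall>\<beta>\<in>colourings V E k.
        \<exists>xs. xs \<noteq> [] \<and> hd xs = \<alpha> \<and> last xs = \<beta> \<and> set xs \<subseteq> colourings V E k \<and>
             (\<forall>i < length xs - 1. recolour_adj V (xs ! i) (xs ! Suc i)))"

end

theory Submission
  imports Defs
begin

text \<open>
  By induction on the number of vertices, \<open>R\<^sub>l(G)\<close> is connected for every set of \<open>l > \<chi>(G)\<close>
  colours. A \<open>(P\<^sub>5, C\<^sub>4)\<close>-free graph with at least two vertices either has a nonempty proper
  vertex set \<open>B\<close> whose neighbours outside \<open>B\<close> form a clique \<open>Y\<close> complete to \<open>B\<close>, or it is a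
  non-complete blowup of \<open>C\<^sub>5\<close> by cliques. The set \<open>B\<close> consists of the vertices cloning a
  position of an induced \<open>C\<^sub>5\<close> or, if there is none, is a component of the non-neighbourhood of
  a vertex of maximum degree.

  Given \<open>B\<close>, a recolouring sequence of \<open>G - B\<close> lifts to \<open>G\<close>: before each step, \<open>B\<close> is
  recoloured by induction to avoid the colours of \<open>Y\<close> and the colour about to be used. In a
  blowup of \<open>C\<^sub>5\<close> every colour class has at most two vertices; a few recolourings reach a
  colouring in which some non-adjacent pair is a whole colour class and some colour is unused,
  and two such colourings are connected by induction on \<open>G\<close> minus such pairs.
\<close>

section \<open>Colourings and recolouring sequences\<close>

definition proper_colouring :: "'a set \<Rightarrow> 'a set set \<Rightarrow> nat set \<Rightarrow> ('a \<Rightarrow> nat) \<Rightarrow> bool" where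
  "proper_colouring V E L \<alpha> \<longleftrightarrow> \<alpha> \<in> V \<rightarrow>\<^sub>E L \<and> (\<forall>u\<in>V. \<forall>v\<in>V. {u, v} \<in> E \<longrightarrow> \<alpha> u \<noteq> \<alpha> v)"

definition recolour_step :: "'a set \<Rightarrow> 'a set set \<Rightarrow> nat set \<Rightarrow> ('a \<Rightarrow> nat) \<Rightarrow> ('a \<Rightarrow> nat) \<Rightarrow> bool" where
  "recolour_step V E L \<alpha> \<beta> \<longleftrightarrow>
     proper_colouring V E L \<alpha> \<and> proper_colouring V E L \<beta> \<and> (\<exists>u. \<forall>v. v \<noteq> u \<longrightarrow> \<alpha> v = \<beta> v)"

abbreviation recolour_reach :: "'a set \<Rightarrow> 'a set set \<Rightarrow> nat set \<Rightarrow> ('a \<Rightarrow> nat) \<Rightarrow> ('a \<Rightarrow> nat) \<Rightarrow> bool" where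
  "recolour_reach V E L \<equiv> (recolour_step V E L)\<^sup>*\<^sup>*"

definition recolour_connected :: "'a set \<Rightarrow> 'a set set \<Rightarrow> nat set \<Rightarrow> bool" where
  "recolour_connected V E L \<longleftrightarrow>
     (\<forall>\<alpha> \<beta>. proper_colouring V E L \<alpha> \<longrightarrow> proper_colouring V E L \<beta> \<longrightarrow> recolour_reach V E L \<alpha> \<beta>)"

text \<open>Colours range over an arbitrary finite set rather than \<open>{1..k}\<close>, so that an induced
  subgraph can be recoloured with the colours its surroundings leave free.\<close>
definition mixing :: "'a set \<Rightarrow> 'a set set \<Rightarrow> bool" where
  "mixing V E \<longleftrightarrow> (\<forall>L. finite L \<longrightarrow> chromatic_number V E < card L \<longrightarrow> recolour_connected V E L)"

definition loopless :: "'a set set \<Rightarrow> bool" where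
  "loopless E \<longleftrightarrow> (\<forall>v. {v} \<notin> E)"

lemma loopless_edge_neq: "loopless E \<Longrightarrow> {u, v} \<in> E \<Longrightarrow> u \<noteq> v"
  unfolding loopless_def by auto

lemma colourings_eq: "colourings V E k = Collect (proper_colouring V E {1..k})"
  unfolding colourings_def proper_colouring_def by auto

lemma proper_colouring_undefined: "proper_colouring V E L \<alpha> \<Longrightarrow> v \<notin> V \<Longrightarrow> \<alpha> v = undefined"
  unfolding proper_colouring_def by (auto simp: PiE_def extensional_def)

lemma proper_colouring_in: "proper_colouring V E L \<alpha> \<Longrightarrow> v \<in> V \<Longrightarrow> \<alpha> v \<in> L"
  unfolding proper_colouring_def by auto

lemma proper_colouring_adj:
  "proper_colouring V E L \<alpha> \<Longrightarrow> u \<in> V \<Longrightarrow> v \<in> V \<Longrightarrow> {u, v} \<in> E \<Longrightarrow> \<alpha> u \<noteq> \<alpha> v"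
  unfolding proper_colouring_def by auto

lemma proper_colouringI:
  assumes "\<And>v. v \<in> V \<Longrightarrow> \<alpha> v \<in> L" and "\<And>v. v \<notin> V \<Longrightarrow> \<alpha> v = undefined"
    and "\<And>u v. u \<in> V \<Longrightarrow> v \<in> V \<Longrightarrow> {u, v} \<in> E \<Longrightarrow> \<alpha> u \<noteq> \<alpha> v"
  shows "proper_colouring V E L \<alpha>"
  using assms unfolding proper_colouring_def by (auto simp: PiE_def extensional_def)

lemma proper_colouring_restrict:
  "proper_colouring V E L \<alpha> \<Longrightarrow> B \<subseteq> V \<Longrightarrow> proper_colouring B E L (restrict \<alpha> B)"
  unfolding proper_colouring_def by auto

lemma proper_colouring_colours_mono:
  "proper_colouring V E L \<alpha> \<Longrightarrow> \<alpha> ` V \<subseteq> L' \<Longrightarrow> proper_colouring V E L' \<alpha>"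
  unfolding proper_colouring_def by (auto simp: PiE_def Pi_def)

lemma proper_colouring_relabel:
  assumes "proper_colouring V E L \<alpha>" and "inj_on g L" and "g ` L \<subseteq> L'"
  shows "proper_colouring V E L' (restrict (g \<circ> \<alpha>) V)"
proof (rule proper_colouringI)
  fix u v assume "u \<in> V" "v \<in> V" "{u, v} \<in> E"
  then show "restrict (g \<circ> \<alpha>) V u \<noteq> restrict (g \<circ> \<alpha>) V v"
    using assms proper_colouring_adj[OF assms(1)] proper_colouring_in[OF assms(1)]
    by (simp add: inj_on_eq_iff)
qed (use assms proper_colouring_in[OF assms(1)] in auto)

lemma proper_colouring_update:
  assumes "proper_colouring V E L \<alpha>" and "v \<in> V" and "c \<in> L"
    and "\<And>w. w \<in> V \<Longrightarrow> {v, w} \<in> E \<Longrightarrow> \<alpha> w \<noteq> c"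
  shows "proper_colouring V E L (\<alpha>(v := c))"
proof (rule proper_colouringI)
  fix x y assume xy: "x \<in> V" "y \<in> V" "{x, y} \<in> E"
  then have yx: "{y, x} \<in> E"
    by (simp add: insert_commute)
  show "(\<alpha>(v := c)) x \<noteq> (\<alpha>(v := c)) y"
    using assms(4)[of y] assms(4)[of x] xy yx proper_colouring_adj[OF assms(1) xy]
    by (cases "x = v"; cases "y = v") auto
qed (use assms proper_colouring_in proper_colouring_undefined in auto)

lemma recolour_step_sym: "recolour_step V E L \<alpha> \<beta> \<Longrightarrow> recolour_step V E L \<beta> \<alpha>"
  unfolding recolour_step_def by metis

lemma recolour_reach_sym: "recolour_reach V E L \<alpha> \<beta> \<Longrightarrow> recolour_reach V E L \<beta> \<alpha>"
  by (induction rule: rtranclp_induct)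
    (simp, metis converse_rtranclp_into_rtranclp recolour_step_sym)

lemma recolour_reach_update:
  assumes "proper_colouring V E L \<alpha>" and "v \<in> V" and "c \<in> L"
    and "\<And>w. w \<in> V \<Longrightarrow> {v, w} \<in> E \<Longrightarrow> \<alpha> w \<noteq> c"
  shows "recolour_reach V E L \<alpha> (\<alpha>(v := c))"
  using proper_colouring_update[OF assms] assms(1) unfolding recolour_step_def by auto

lemma recolour_reach_colouring:
  "recolour_reach V E L \<alpha> \<beta> \<Longrightarrow> proper_colouring V E L \<alpha> \<Longrightarrow> proper_colouring V E L \<beta>"
  by (induction rule: rtranclp_induct) (auto simp: recolour_step_def)

lemma recolour_reach_map:
  assumes "\<And>\<tau>. proper_colouring V' E' L' \<tau> \<Longrightarrow> proper_colouring V E L (F \<tau>)"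
    and "\<And>\<tau> \<tau>' w. \<tau> w = \<tau>' w \<Longrightarrow> F \<tau> w = F \<tau>' w"
    and "recolour_reach V' E' L' \<sigma> \<sigma>'"
  shows "recolour_reach V E L (F \<sigma>) (F \<sigma>')"
  using assms(3)
proof (induction rule: rtranclp_induct)
  case (step \<tau> \<tau>')
  then obtain u where "proper_colouring V' E' L' \<tau>" "proper_colouring V' E' L' \<tau>'"
    "\<forall>v. v \<noteq> u \<longrightarrow> \<tau> v = \<tau>' v"
    unfolding recolour_step_def by blast
  then have "recolour_step V E L (F \<tau>) (F \<tau>')"
    using assms(1,2) unfolding recolour_step_def by blast
  then show ?case
    using step.IH by simp
qed simp

lemma recolour_connected_subsingleton:
  assumes "V \<subseteq> {u}"
  shows "recolour_connected V E L"
  unfolding recolour_connected_def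
proof (intro allI impI)
  fix \<alpha> \<beta> assume "proper_colouring V E L \<alpha>" "proper_colouring V E L \<beta>"
  moreover have "\<forall>v. v \<noteq> u \<longrightarrow> \<alpha> v = \<beta> v"
    using calculation assms by (metis proper_colouring_undefined singletonD subsetD)
  ultimately show "recolour_reach V E L \<alpha> \<beta>"
    unfolding recolour_step_def by blast
qed

lemma recolour_step_adj:
  assumes "recolour_step V E L \<alpha> \<beta>" "\<alpha> \<noteq> \<beta>"
  shows "recolour_adj V \<alpha> \<beta>"
proof -
  obtain u where \<alpha>\<beta>: "proper_colouring V E L \<alpha>" "proper_colouring V E L \<beta>" "\<forall>v. v \<noteq> u \<longrightarrow> \<alpha> v = \<beta> v"
    using assms(1) unfolding recolour_step_def by blast
  then have "\<alpha> u \<noteq> \<beta> u"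
    using assms(2) by (metis ext)
  then have "u \<in> V"
    using proper_colouring_undefined[OF \<alpha>\<beta>(1)] proper_colouring_undefined[OF \<alpha>\<beta>(2)] by metis
  then have "{v\<in>V. \<alpha> v \<noteq> \<beta> v} = {u}"
    using \<alpha>\<beta>(3) \<open>\<alpha> u \<noteq> \<beta> u\<close> by blast
  then show ?thesis
    unfolding recolour_adj_def by simp
qed

lemma recolour_reach_path:
  assumes "recolour_reach V E L \<alpha> \<beta>" "proper_colouring V E L \<alpha>"
  shows "\<exists>xs. xs \<noteq> [] \<and> hd xs = \<alpha> \<and> last xs = \<beta> \<and> set xs \<subseteq> Collect (proper_colouring V E L) \<and>
    (\<forall>i < length xs - 1. recolour_adj V (xs ! i) (xs ! Suc i))"
  using assms(1)
proof (induction rule: rtranclp_induct)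
  case base
  show ?case
    using assms(2) by (intro exI[of _ "[\<alpha>]"]) simp
next
  case (step \<gamma> \<delta>)
  then obtain xs where xs: "xs \<noteq> []" "hd xs = \<alpha>" "last xs = \<gamma>" "set xs \<subseteq> Collect (proper_colouring V E L)"
    "\<forall>i < length xs - 1. recolour_adj V (xs ! i) (xs ! Suc i)"
    by blast
  show ?case
  proof (cases "\<gamma> = \<delta>")
    case False
    have "recolour_adj V ((xs @ [\<delta>]) ! i) ((xs @ [\<delta>]) ! Suc i)" if "i < length xs" for i
    proof (cases "i = length xs - 1")
      case True
      then show ?thesis
        using recolour_step_adj[OF step(2) False] xs(1,3) by (simp add: nth_append last_conv_nth)
    next
      case False
      then have "Suc i < length xs"
        using that by linarith
      then show ?thesis
        using xs(5) by (simp add: nth_append)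
    qed
    moreover have "proper_colouring V E L \<delta>"
      using step(2) unfolding recolour_step_def by blast
    ultimately show ?thesis
      using xs(1,2,4) by (intro exI[of _ "xs @ [\<delta>]"]) auto
  qed (use xs in blast)
qed

lemma chromatic_number_colouring:
  assumes "finite V" and "loopless E"
  shows "\<exists>\<alpha>. proper_colouring V E {1..chromatic_number V E} \<alpha>"
proof -
  obtain h where h: "bij_betw h V {0..<card V}"
    using ex_bij_betw_finite_nat[OF assms(1)] by blast
  have "proper_colouring V E {1..card V} (restrict (\<lambda>v. h v + 1) V)"
    using h loopless_edge_neq[OF assms(2)]
    by (intro proper_colouringI) (auto simp: bij_betw_def inj_on_def Suc_le_eq image_subset_iff)
  then have "colourings V E (card V) \<noteq> {}"
    by (auto simp: colourings_eq)
  then have "colourings V E (chromatic_number V E) \<noteq> {}"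
    unfolding chromatic_number_def by (rule LeastI)
  then show ?thesis by (auto simp: colourings_eq)
qed

lemma chromatic_number_le_card:
  assumes "proper_colouring V E L \<alpha>" and "finite L"
  shows "chromatic_number V E \<le> card L"
proof -
  obtain g where g: "bij_betw g L {0..<card L}"
    using ex_bij_betw_finite_nat[OF assms(2)] by blast
  have "proper_colouring V E {1..card L} (restrict ((\<lambda>c. g c + 1) \<circ> \<alpha>) V)"
    by (rule proper_colouring_relabel[OF assms(1)])
      (use g in \<open>auto simp: bij_betw_def inj_on_def Suc_le_eq image_subset_iff\<close>)
  then have "colourings V E (card L) \<noteq> {}"
    by (auto simp: colourings_eq)
  then show ?thesis
    unfolding chromatic_number_def by (rule Least_le)
qed

lemma proper_colouring_exists:
  assumes "finite V" and "loopless E" and "finite L" and "chromatic_number V E \<le> card L"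
  shows "\<exists>\<alpha>. proper_colouring V E L \<alpha>"
proof -
  obtain \<alpha> where \<alpha>: "proper_colouring V E {1..chromatic_number V E} \<alpha>"
    using chromatic_number_colouring[OF assms(1,2)] by blast
  obtain g where "g ` {1..chromatic_number V E} \<subseteq> L" "inj_on g {1..chromatic_number V E}"
    using card_le_inj[of "{1..chromatic_number V E}" L] assms(3,4) by auto
  then show ?thesis
    using proper_colouring_relabel[OF \<alpha>] by blast
qed

lemma chromatic_number_mono:
  assumes "finite V" and "loopless E" and "B \<subseteq> V"
  shows "chromatic_number B E \<le> chromatic_number V E"
proof -
  obtain \<alpha> where "proper_colouring V E {1..chromatic_number V E} \<alpha>"
    using chromatic_number_colouring[OF assms(1,2)] by blast
  from chromatic_number_le_card[OF proper_colouring_restrict[OF this assms(3)]] show ?thesis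
    by simp
qed

lemma clique_card_le_colours:
  assumes "proper_colouring V E L \<alpha>" and "finite L" and "K \<subseteq> V"
    and "\<And>x y. x \<in> K \<Longrightarrow> y \<in> K \<Longrightarrow> x \<noteq> y \<Longrightarrow> {x, y} \<in> E"
  shows "card K \<le> card L"
proof -
  have "inj_on \<alpha> K"
    using assms(3,4) proper_colouring_adj[OF assms(1)] by (meson inj_onI subsetD)
  moreover have "\<alpha> ` K \<subseteq> L"
    using assms(3) proper_colouring_in[OF assms(1)] by auto
  ultimately show ?thesis
    using assms(2) card_inj_on_le by blast
qed

lemma clique_card_le_chromatic_number:
  assumes "finite V" and "loopless E" and "K \<subseteq> V"
    and "\<And>x y. x \<in> K \<Longrightarrow> y \<in> K \<Longrightarrow> x \<noteq> y \<Longrightarrow> {x, y} \<in> E"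
  shows "card K \<le> chromatic_number V E"
proof -
  obtain \<alpha> where "proper_colouring V E {1..chromatic_number V E} \<alpha>"
    using chromatic_number_colouring[OF assms(1,2)] by blast
  from clique_card_le_colours[OF this _ assms(3,4)] show ?thesis
    by simp
qed

section \<open>Forbidden induced subgraphs and five-cycles\<close>

lemma has_induced_mono: "has_induced B E n H \<Longrightarrow> B \<subseteq> V \<Longrightarrow> has_induced V E n H"
  unfolding has_induced_def by (meson order_trans)

lemma P5_C4_free_subset: "P5_C4_free V E \<Longrightarrow> B \<subseteq> V \<Longrightarrow> P5_C4_free B E"
  unfolding P5_C4_free_def using has_induced_mono[of B E _ _ V] by blast

lemma has_induced_listI:
  assumes "distinct xs" and "set xs \<subseteq> V"
    and "\<And>i j. i < length xs \<Longrightarrow> j < length xs \<Longrightarrow> {xs ! i, xs ! j} \<in> E \<longleftrightarrow> H i j"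
  shows "has_induced V E (length xs) H"
  unfolding has_induced_def
proof (intro exI conjI)
  show "inj_on ((!) xs) {0..<length xs}"
    using assms(1) by (simp add: inj_on_def nth_eq_iff_index_eq)
  show "(!) xs ` {0..<length xs} \<subseteq> V"
    using assms(2) by (auto simp: image_subset_iff)
qed (use assms(3) in auto)

definition C5_adj :: "nat \<Rightarrow> nat \<Rightarrow> bool" where
  "C5_adj i j \<longleftrightarrow> (i + 1) mod 5 = j \<or> (j + 1) mod 5 = i"

definition C5_near :: "nat \<Rightarrow> nat \<Rightarrow> bool" where
  "C5_near i j \<longleftrightarrow> i = j \<or> (i + 1) mod 5 = j \<or> (j + 1) mod 5 = i"

lemma has_induced_C5I:
  assumes "loopless E" "a \<in> V" "b \<in> V" "c \<in> V" "d \<in> V" "e \<in> V"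
    and "{a, b} \<in> E" "{b, c} \<in> E" "{c, d} \<in> E" "{d, e} \<in> E" "{e, a} \<in> E"
    and "{a, c} \<notin> E" "{a, d} \<notin> E" "{b, d} \<notin> E" "{b, e} \<notin> E" "{c, e} \<notin> E"
  shows "has_induced V E 5 C5_adj"
proof -
  have "has_induced V E (length [a, b, c, d, e]) C5_adj"
  proof (rule has_induced_listI)
    show "distinct [a, b, c, d, e]"
      using assms loopless_edge_neq[OF assms(1)] by (auto simp: insert_commute)
    fix i j assume "i < length [a, b, c, d, e]" "j < length [a, b, c, d, e]"
    then have "i \<in> {0, 1, 2, 3, 4}" "j \<in> {0, 1, 2, 3, 4}"
      by auto
    then show "{[a, b, c, d, e] ! i, [a, b, c, d, e] ! j} \<in> E \<longleftrightarrow> C5_adj i j"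
      using assms loopless_edge_neq[OF assms(1)] by (auto simp: C5_adj_def insert_commute)
  qed (use assms in auto)
  then show ?thesis
    by (simp add: numeral_eq_Suc)
qed

locale P5_C4_free_graph =
  fixes V :: "'a set" and E :: "'a set set"
  assumes finite_vertices: "finite V" and loopless: "loopless E" and P5_C4_free: "P5_C4_free V E"
begin

lemma no_induced_C4:
  assumes "a \<in> V" "b \<in> V" "c \<in> V" "d \<in> V" "a \<noteq> c" "b \<noteq> d"
    and "{a, b} \<in> E" "{b, c} \<in> E" "{c, d} \<in> E" "{d, a} \<in> E" "{a, c} \<notin> E" "{b, d} \<notin> E"
  shows False
proof -
  have "has_induced V E (length [a, b, c, d]) C4_adj"
  proof (rule has_induced_listI)
    show "distinct [a, b, c, d]"
      using assms loopless_edge_neq[OF loopless] by (auto simp: insert_commute)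
    fix i j assume "i < length [a, b, c, d]" "j < length [a, b, c, d]"
    then have "i \<in> {0, 1, 2, 3}" "j \<in> {0, 1, 2, 3}"
      by auto
    then show "{[a, b, c, d] ! i, [a, b, c, d] ! j} \<in> E \<longleftrightarrow> C4_adj i j"
      using assms loopless_edge_neq[OF loopless] by (auto simp: C4_adj_def insert_commute)
  qed (use assms in auto)
  then show False
    using P5_C4_free by (simp add: P5_C4_free_def numeral_eq_Suc)
qed

lemma no_induced_P5:
  assumes "a \<in> V" "b \<in> V" "c \<in> V" "d \<in> V" "e \<in> V"
    and "{a, b} \<in> E" "{b, c} \<in> E" "{c, d} \<in> E" "{d, e} \<in> E"
    and "{a, c} \<notin> E" "{a, d} \<notin> E" "{a, e} \<notin> E" "{b, d} \<notin> E" "{b, e} \<notin> E" "{c, e} \<notin> E"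
  shows False
proof -
  have "has_induced V E (length [a, b, c, d, e]) P5_adj"
  proof (rule has_induced_listI)
    show "distinct [a, b, c, d, e]"
      using assms loopless_edge_neq[OF loopless] by (auto simp: insert_commute)
    fix i j assume "i < length [a, b, c, d, e]" "j < length [a, b, c, d, e]"
    then have "i \<in> {0, 1, 2, 3, 4}" "j \<in> {0, 1, 2, 3, 4}"
      by auto
    then show "{[a, b, c, d, e] ! i, [a, b, c, d, e] ! j} \<in> E \<longleftrightarrow> P5_adj i j"
      using assms loopless_edge_neq[OF loopless] by (auto simp: P5_adj_def insert_commute)
  qed (use assms in auto)
  then show False
    using P5_C4_free by (simp add: P5_C4_free_def numeral_eq_Suc)
qed

end

text \<open>The cycle is indexed periodically by all of \<open>nat\<close>, so that rotating it is a shift of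
  the index and positions can be written \<open>i + 1, \<dots>, i + 4\<close> without reduction mod 5.\<close>
definition induced_C5 :: "'a set \<Rightarrow> 'a set set \<Rightarrow> (nat \<Rightarrow> 'a) \<Rightarrow> bool" where
  "induced_C5 V E c \<longleftrightarrow> (\<forall>k. c k \<in> V) \<and>
     (\<forall>k l. {c k, c l} \<in> E \<longleftrightarrow> (k + 1) mod 5 = l mod 5 \<or> (l + 1) mod 5 = k mod 5) \<and>
     (\<forall>k l. c k = c l \<longleftrightarrow> k mod 5 = l mod 5)"

definition C5_clone :: "'a set set \<Rightarrow> (nat \<Rightarrow> 'a) \<Rightarrow> 'a \<Rightarrow> nat \<Rightarrow> bool" where
  "C5_clone E c v i \<longleftrightarrow> (v = c i \<or> {v, c i} \<in> E) \<and> {v, c (i + 4)} \<in> E \<and> {v, c (i + 1)} \<in> E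
     \<and> {v, c (i + 2)} \<notin> E \<and> {v, c (i + 3)} \<notin> E"

lemma mod_5_add_cancel: "(a + i) mod 5 = (b + i) mod 5 \<longleftrightarrow> a mod 5 = (b :: nat) mod 5"
proof
  assume "(a + i) mod 5 = (b + i) mod 5"
  then have "(a + i + 4 * i) mod 5 = (b + i + 4 * i) mod 5"
    by (rule mod_add_cong) simp
  then show "a mod 5 = b mod 5"
    by (simp add: algebra_simps)
qed (rule mod_add_cong, simp_all)

lemma below_5_cases: "(i :: nat) < 5 \<Longrightarrow> i = 0 \<or> i = 1 \<or> i = 2 \<or> i = 3 \<or> i = 4"
  by linarith

lemma C5_near_shift:
  assumes "i < 5" "j < 5"
  shows "C5_near 0 ((j + 5 - i) mod 5) \<longleftrightarrow> C5_near i j"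
proof -
  from below_5_cases[OF assms(1)] below_5_cases[OF assms(2)] show ?thesis
    unfolding C5_near_def by (elim disjE) simp_all
qed

lemma induced_C5_in: "induced_C5 V E c \<Longrightarrow> c k \<in> V"
  unfolding induced_C5_def by auto

lemma induced_C5_edge_iff:
  "induced_C5 V E c \<Longrightarrow> {c k, c l} \<in> E \<longleftrightarrow> (k + 1) mod 5 = l mod 5 \<or> (l + 1) mod 5 = k mod 5"
  unfolding induced_C5_def by auto

lemma induced_C5_eq_iff: "induced_C5 V E c \<Longrightarrow> c k = c l \<longleftrightarrow> k mod 5 = l mod 5"
  unfolding induced_C5_def by auto

lemma induced_C5_mod: "induced_C5 V E c \<Longrightarrow> c (k mod 5) = c k"
  by (simp add: induced_C5_eq_iff)

lemma induced_C5_wrap: "induced_C5 V E c \<Longrightarrow> c 5 = c 0 \<and> c 6 = c 1 \<and> c 7 = c 2 \<and> c 8 = c 3"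
  by (simp add: induced_C5_eq_iff)

lemma induced_C5_shift:
  assumes "induced_C5 V E c"
  shows "induced_C5 V E (\<lambda>k. c (k + i))"
  using assms mod_5_add_cancel[of "_ + 1" i] unfolding induced_C5_def
  by (auto simp: mod_5_add_cancel ac_simps)

lemma has_induced_C5E:
  assumes "has_induced V E 5 C5_adj"
  obtains c where "induced_C5 V E c"
proof -
  obtain f where f: "inj_on f {0..<5}" "f ` {0..<5} \<subseteq> V"
    "\<forall>i\<in>{0..<5}. \<forall>j\<in>{0..<5}. {f i, f j} \<in> E \<longleftrightarrow> C5_adj i j"
    using assms unfolding has_induced_def by blast
  have "induced_C5 V E (\<lambda>k. f (k mod 5))"
    unfolding induced_C5_def
  proof (intro conjI allI)
    fix k l
    have "{f (k mod 5), f (l mod 5)} \<in> E \<longleftrightarrow> C5_adj (k mod 5) (l mod 5)"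
      using f(3) by auto
    then show "{f (k mod 5), f (l mod 5)} \<in> E \<longleftrightarrow> (k + 1) mod 5 = l mod 5 \<or> (l + 1) mod 5 = k mod 5"
      unfolding C5_adj_def by (simp add: mod_Suc_eq)
    show "f (k mod 5) = f (l mod 5) \<longleftrightarrow> k mod 5 = l mod 5"
      using f(1) unfolding inj_on_def by auto
  qed (use f(2) in auto)
  then show thesis
    by (rule that)
qed

lemma C5_clone_shift: "C5_clone E c v i = C5_clone E (\<lambda>k. c (k + i)) v 0"
  unfolding C5_clone_def by (simp add: add.commute)

lemma C5_clone_positions:
  "C5_clone E c v 0 \<longleftrightarrow> (v = c 0 \<or> {v, c 0} \<in> E) \<and> {v, c 4} \<in> E \<and> {v, c 1} \<in> E
     \<and> {v, c 2} \<notin> E \<and> {v, c 3} \<notin> E"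
  "C5_clone E c v 1 \<longleftrightarrow> (v = c 1 \<or> {v, c 1} \<in> E) \<and> {v, c 5} \<in> E \<and> {v, c 2} \<in> E
     \<and> {v, c 3} \<notin> E \<and> {v, c 4} \<notin> E"
  "C5_clone E c v 2 \<longleftrightarrow> (v = c 2 \<or> {v, c 2} \<in> E) \<and> {v, c 6} \<in> E \<and> {v, c 3} \<in> E
     \<and> {v, c 4} \<notin> E \<and> {v, c 5} \<notin> E"
  "C5_clone E c v 3 \<longleftrightarrow> (v = c 3 \<or> {v, c 3} \<in> E) \<and> {v, c 7} \<in> E \<and> {v, c 4} \<in> E
     \<and> {v, c 5} \<notin> E \<and> {v, c 6} \<notin> E"
  "C5_clone E c v 4 \<longleftrightarrow> (v = c 4 \<or> {v, c 4} \<in> E) \<and> {v, c 8} \<in> E \<and> {v, c 5} \<in> E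
     \<and> {v, c 6} \<notin> E \<and> {v, c 7} \<notin> E"
  unfolding C5_clone_def by (simp_all add: eval_nat_numeral)

lemma C5_clone_mod:
  assumes "induced_C5 V E c"
  shows "C5_clone E c v (i mod 5) = C5_clone E c v i"
proof -
  have "c (i mod 5 + t) = c (i + t)" for t
    using assms by (simp add: induced_C5_eq_iff mod_add_left_eq)
  then show ?thesis
    unfolding C5_clone_def by (metis add_0_right)
qed

lemma C5_clone_shift_to:
  assumes "induced_C5 V E c" "i < 5" "j < 5"
  shows "C5_clone E c v j = C5_clone E (\<lambda>k. c (k + i)) v ((j + 5 - i) mod 5)"
proof -
  have "C5_clone E (\<lambda>k. c (k + i)) v ((j + 5 - i) mod 5) = C5_clone E c v ((j + 5 - i) mod 5 + i)"
    unfolding C5_clone_def by (simp add: ac_simps)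
  also have "\<dots> = C5_clone E c v j"
    using C5_clone_mod[OF assms(1), of v "(j + 5 - i) mod 5 + i"] C5_clone_mod[OF assms(1), of v j] assms(2,3)
    by (simp add: mod_add_left_eq)
  finally show ?thesis ..
qed

lemma C5_clone_self:
  assumes "induced_C5 V E c"
  shows "C5_clone E c (c k) (k mod 5)"
proof -
  have "C5_clone E d (d 0) 0" if "induced_C5 V E d" for d
    unfolding C5_clone_positions using that by (simp add: induced_C5_edge_iff)
  from this[OF induced_C5_shift[OF assms, of k]] have "C5_clone E c (c k) k"
    by (simp add: C5_clone_shift[symmetric])
  then show ?thesis
    using C5_clone_mod[OF assms] by metis
qed

definition clique_split :: "'a set \<Rightarrow> 'a set set \<Rightarrow> 'a set \<Rightarrow> 'a set \<Rightarrow> bool" where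
  "clique_split V E B Y \<longleftrightarrow> B \<noteq> {} \<and> B \<subset> V \<and> Y \<subseteq> V - B \<and>
     (\<forall>y\<in>Y. \<forall>y'\<in>Y. y \<noteq> y' \<longrightarrow> {y, y'} \<in> E) \<and> (\<forall>b\<in>B. \<forall>y\<in>Y. {b, y} \<in> E) \<and>
     (\<forall>b\<in>B. \<forall>z\<in>V - B - Y. {b, z} \<notin> E)"

definition C5_blowup :: "'a set \<Rightarrow> 'a set set \<Rightarrow> ('a \<Rightarrow> nat) \<Rightarrow> bool" where
  "C5_blowup V E q \<longleftrightarrow> (\<forall>v\<in>V. q v < 5) \<and>
     (\<forall>x\<in>V. \<forall>y\<in>V. x \<noteq> y \<longrightarrow> {x, y} \<in> E \<longleftrightarrow> C5_near (q x) (q y))"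

locale C5_in_P5_C4_free_graph = P5_C4_free_graph +
  fixes c :: "nat \<Rightarrow> 'a"
  assumes induced_C5: "induced_C5 V E c"
begin

lemmas cycle = induced_C5_edge_iff[OF induced_C5] induced_C5_eq_iff[OF induced_C5]
  induced_C5_in[OF induced_C5] induced_C5_wrap[OF induced_C5]

lemma shift: "C5_in_P5_C4_free_graph V E (\<lambda>k. c (k + i))"
  by (intro C5_in_P5_C4_free_graph.intro P5_C4_free_graph_axioms
      C5_in_P5_C4_free_graph_axioms.intro induced_C5_shift[OF induced_C5])

lemma outer_nbr_fills_gap:
  assumes "v \<in> V" "\<forall>k. v \<noteq> c k" "{v, c 0} \<in> E" "{v, c 2} \<in> E"
  shows "{v, c 1} \<in> E"
proof (rule ccontr)
  assume "{v, c 1} \<notin> E"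
  moreover have "{c 2, v} \<in> E"
    using assms(4) by (simp add: insert_commute)
  ultimately show False
    using no_induced_C4[of v "c 0" "c 1" "c 2"] assms by (simp add: cycle)
qed

lemma outer_nbr_continues:
  assumes "v \<in> V" "{v, c 0} \<in> E" "{v, c 1} \<notin> E" "{v, c 2} \<notin> E" "{v, c 3} \<notin> E"
  shows False
  using no_induced_P5[of v "c 0" "c 1" "c 2" "c 3"] assms by (simp add: cycle)

lemma clone_adj_complete:
  assumes "C5_clone E c b 0" "b \<in> V" "y \<in> V" "\<forall>k. {y, c k} \<in> E" "b \<noteq> y"
  shows "{b, y} \<in> E"
proof (rule ccontr)
  assume "{b, y} \<notin> E"
  moreover have "{b, c 1} \<in> E" "{c 4, b} \<in> E"
    using assms(1) unfolding C5_clone_positions by (simp_all add: insert_commute)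
  moreover have "{c 1, y} \<in> E" "{y, c 4} \<in> E"
    using assms(4) by (auto simp: insert_commute)
  ultimately show False
    using no_induced_C4[of b "c 1" y "c 4"] assms(2,3,5) by (simp add: cycle)
qed

lemma clone_not_adj_anticomplete:
  assumes "C5_clone E c b 0" "b \<in> V" "z \<in> V" "\<forall>k. {z, c k} \<notin> E"
  shows "{b, z} \<notin> E"
proof
  assume "{b, z} \<in> E"
  then have "{z, b} \<in> E"
    by (simp add: insert_commute)
  then show False
    using no_induced_P5[of z b "c 1" "c 2" "c 3"] assms unfolding C5_clone_positions
    by (simp add: cycle)
qed

lemma clones_adj_if_near:
  assumes "C5_clone E c b 0" "C5_clone E c b' j" "j < 5" "C5_near 0 j" "b \<noteq> b'" "b \<in> V" "b' \<in> V"
  shows "{b, b'} \<in> E"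
proof -
  have p: "{b, c 1} \<in> E" "{b, c 4} \<in> E" "{b, c 2} \<notin> E" "{b, c 3} \<notin> E"
    using assms(1) unfolding C5_clone_positions by simp_all
  have "j = 0 \<or> j = 1 \<or> j = 4"
    using assms(3,4) below_5_cases[OF assms(3)] unfolding C5_near_def by auto
  then show ?thesis
  proof (elim disjE)
    assume j: "j = 0"
    have "{c 1, b'} \<in> E" "{b', c 4} \<in> E" "{c 4, b} \<in> E"
      using assms(2) p(2) unfolding j C5_clone_positions by (simp_all add: insert_commute)
    then show ?thesis
      using no_induced_C4[of b "c 1" b' "c 4"] assms(5-7) p(1) by (auto simp: cycle)
  next
    assume j: "j = 1"
    have "{c 2, b'} \<in> E" "{c 3, b'} \<notin> E" "{c 4, b'} \<notin> E"
      using assms(2) unfolding j C5_clone_positions by (simp_all add: insert_commute)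
    then show ?thesis
      using no_induced_P5[of b "c 4" "c 3" "c 2" b'] assms(5-7) p by (auto simp: cycle insert_commute)
  next
    assume j: "j = 4"
    have "{c 3, b'} \<in> E" "{c 1, b'} \<notin> E" "{c 2, b'} \<notin> E"
      using assms(2) cycle unfolding j C5_clone_positions by (simp_all add: insert_commute)
    then show ?thesis
      using no_induced_P5[of b "c 1" "c 2" "c 3" b'] assms(5-7) p by (auto simp: cycle)
  qed
qed

lemma clones_not_adj_if_far:
  assumes "C5_clone E c b 0" "C5_clone E c b' j" "j < 5" "\<not> C5_near 0 j" "b \<in> V" "b' \<in> V"
  shows "{b, b'} \<notin> E"
proof -
  have p: "{b, c 1} \<in> E" "{b, c 4} \<in> E" "{b, c 2} \<notin> E" "{b, c 3} \<notin> E"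
    using assms(1) unfolding C5_clone_positions by simp_all
  have "j = 2 \<or> j = 3"
    using assms(3,4) below_5_cases[OF assms(3)] unfolding C5_near_def by auto
  then show ?thesis
  proof (elim disjE)
    assume j: "j = 2"
    have q: "{b', c 3} \<in> E" "{b', c 4} \<notin> E" "{b', c 1} \<in> E"
      using assms(2) cycle unfolding j C5_clone_positions by simp_all
    have "b \<noteq> c 3" "b' \<noteq> c 4" "{c 4, b} \<in> E"
      using p(1,2) q(3) by (auto simp: cycle insert_commute)
    then show ?thesis
      using no_induced_C4[of b b' "c 3" "c 4"] assms(5,6) p q(1,2) by (auto simp: cycle)
  next
    assume j: "j = 3"
    have q: "{b', c 2} \<in> E" "{b', c 1} \<notin> E" "{b', c 4} \<in> E"
      using assms(2) cycle unfolding j C5_clone_positions by simp_all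
    have "b \<noteq> c 2" "b' \<noteq> c 1" "{c 1, b} \<in> E"
      using p(1,2) q(3) by (auto simp: cycle insert_commute)
    then show ?thesis
      using no_induced_C4[of b b' "c 2" "c 1"] assms(5,6) p q(1,2) by (auto simp: cycle)
  qed
qed

lemma outer_vertex_cases:
  assumes "v \<in> V" "\<forall>k. v \<noteq> c k"
  shows "(\<forall>k<5. {v, c k} \<in> E) \<or> (\<forall>k<5. {v, c k} \<notin> E) \<or> (\<exists>i<5. C5_clone E c v i)"
proof -
  have gap: "{v, c (0 + i)} \<in> E \<Longrightarrow> {v, c (2 + i)} \<in> E \<Longrightarrow> {v, c (1 + i)} \<in> E" for i
    using C5_in_P5_C4_free_graph.outer_nbr_fills_gap[OF shift, of v i] assms by simp
  have run: "{v, c (0 + i)} \<in> E \<Longrightarrow> {v, c (1 + i)} \<notin> E \<Longrightarrow> {v, c (2 + i)} \<notin> E \<Longrightarrow>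
      {v, c (3 + i)} \<notin> E \<Longrightarrow> False" for i
    using C5_in_P5_C4_free_graph.outer_nbr_continues[OF shift, of v i] assms by simp
  note w = cycle(4)
  have "{v, c 0} \<in> E \<Longrightarrow> {v, c 2} \<in> E \<Longrightarrow> {v, c 1} \<in> E"
    "{v, c 1} \<in> E \<Longrightarrow> {v, c 3} \<in> E \<Longrightarrow> {v, c 2} \<in> E"
    "{v, c 2} \<in> E \<Longrightarrow> {v, c 4} \<in> E \<Longrightarrow> {v, c 3} \<in> E"
    "{v, c 3} \<in> E \<Longrightarrow> {v, c 0} \<in> E \<Longrightarrow> {v, c 4} \<in> E"
    "{v, c 4} \<in> E \<Longrightarrow> {v, c 1} \<in> E \<Longrightarrow> {v, c 0} \<in> E"
    using gap[of 0] gap[of 1] gap[of 2] gap[of 3] gap[of 4] w by (simp_all add: eval_nat_numeral)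
  moreover have
    "{v, c 0} \<in> E \<Longrightarrow> {v, c 1} \<notin> E \<Longrightarrow> {v, c 2} \<notin> E \<Longrightarrow> {v, c 3} \<notin> E \<Longrightarrow> False"
    "{v, c 1} \<in> E \<Longrightarrow> {v, c 2} \<notin> E \<Longrightarrow> {v, c 3} \<notin> E \<Longrightarrow> {v, c 4} \<notin> E \<Longrightarrow> False"
    "{v, c 2} \<in> E \<Longrightarrow> {v, c 3} \<notin> E \<Longrightarrow> {v, c 4} \<notin> E \<Longrightarrow> {v, c 0} \<notin> E \<Longrightarrow> False"
    "{v, c 3} \<in> E \<Longrightarrow> {v, c 4} \<notin> E \<Longrightarrow> {v, c 0} \<notin> E \<Longrightarrow> {v, c 1} \<notin> E \<Longrightarrow> False"
    "{v, c 4} \<in> E \<Longrightarrow> {v, c 0} \<notin> E \<Longrightarrow> {v, c 1} \<notin> E \<Longrightarrow> {v, c 2} \<notin> E \<Longrightarrow> False"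
    using run[of 0] run[of 1] run[of 2] run[of 3] run[of 4] w by (simp_all add: eval_nat_numeral)
  moreover have below_5: "(\<forall>k<5. P k) \<longleftrightarrow> P 0 \<and> P 1 \<and> P 2 \<and> P 3 \<and> P 4"
    "(\<exists>k<5. P k) \<longleftrightarrow> P 0 \<or> P 1 \<or> P 2 \<or> P 3 \<or> P 4" for P :: "nat \<Rightarrow> bool"
    by (auto simp: numeral_eq_Suc less_Suc_eq)
  ultimately show ?thesis
    unfolding below_5 C5_clone_positions by (simp only: w) argo
qed

definition clones :: "'a set" where
  "clones = {v\<in>V. \<exists>i<5. C5_clone E c v i}"

definition complete_to_C5 :: "'a set" where
  "complete_to_C5 = {v\<in>V. \<forall>k. {v, c k} \<in> E}"

lemma cycle_in_clones: "c k \<in> clones"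
  unfolding clones_def using C5_clone_self[OF induced_C5, of k] cycle(3)
  by (metis (mono_tags, lifting) mem_Collect_eq mod_less_divisor zero_less_numeral)

lemma clones_clone_shift:
  assumes "b \<in> clones"
  obtains i where "i < 5" "C5_clone E (\<lambda>k. c (k + i)) b 0"
proof -
  obtain i where "i < 5" "C5_clone E c b i"
    using assms unfolding clones_def by blast
  then show thesis
    using that C5_clone_shift[of E c b i] by blast
qed

lemma vertex_cases:
  assumes "v \<in> V"
  shows "v \<in> clones \<or> v \<in> complete_to_C5 \<or> (\<forall>k. {v, c k} \<notin> E)"
proof (cases "\<exists>k. v = c k")
  case False
  then have "\<forall>k. v \<noteq> c k"
    by blast
  moreover have all_below_5: "(\<forall>k<5. P (c k)) \<longleftrightarrow> (\<forall>k. P (c k))" for P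
    using induced_C5_mod[OF induced_C5] by (metis mod_less_divisor zero_less_numeral)
  ultimately have "(\<forall>k. {v, c k} \<in> E) \<or> (\<forall>k. {v, c k} \<notin> E) \<or> (\<exists>i<5. C5_clone E c v i)"
    using outer_vertex_cases[OF assms] all_below_5[of "\<lambda>u. {v, u} \<in> E"]
      all_below_5[of "\<lambda>u. {v, u} \<notin> E"] by simp
  then show ?thesis
    using assms unfolding clones_def complete_to_C5_def by blast
qed (use cycle_in_clones in auto)

lemma clones_complete_to_C5_disjoint: "clones \<inter> complete_to_C5 = {}"
  unfolding clones_def complete_to_C5_def C5_clone_def by auto

lemma complete_to_C5_clique:
  assumes "y \<in> complete_to_C5" "y' \<in> complete_to_C5" "y \<noteq> y'"
  shows "{y, y'} \<in> E"
proof (rule ccontr)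
  assume "{y, y'} \<notin> E"
  moreover have "{y, c 0} \<in> E" "{c 0, y'} \<in> E" "{y', c 2} \<in> E" "{c 2, y} \<in> E"
    using assms unfolding complete_to_C5_def by (auto simp: insert_commute)
  ultimately show False
    using no_induced_C4[of y "c 0" y' "c 2"] assms unfolding complete_to_C5_def by (simp add: cycle)
qed

lemma clone_adj_complete_to_C5:
  assumes "b \<in> clones" "y \<in> complete_to_C5"
  shows "{b, y} \<in> E"
proof -
  obtain i where "i < 5" "C5_clone E (\<lambda>k. c (k + i)) b 0"
    using clones_clone_shift[OF assms(1)] .
  moreover have "b \<noteq> y"
    using assms clones_complete_to_C5_disjoint by auto
  ultimately show ?thesis
    using C5_in_P5_C4_free_graph.clone_adj_complete[OF shift] assms
    unfolding clones_def complete_to_C5_def by auto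
qed

lemma clone_not_adj_other:
  assumes "b \<in> clones" "z \<in> V - clones - complete_to_C5"
  shows "{b, z} \<notin> E"
proof -
  obtain i where "i < 5" "C5_clone E (\<lambda>k. c (k + i)) b 0"
    using clones_clone_shift[OF assms(1)] .
  moreover have "\<forall>k. {z, c k} \<notin> E"
    using vertex_cases assms(2) by auto
  ultimately show ?thesis
    using C5_in_P5_C4_free_graph.clone_not_adj_anticomplete[OF shift] assms
    unfolding clones_def by auto
qed

lemma clique_split_clones:
  assumes "clones \<noteq> V"
  shows "clique_split V E clones complete_to_C5"
proof -
  have "clones \<subseteq> V" "complete_to_C5 \<subseteq> V"
    unfolding clones_def complete_to_C5_def by auto
  then show ?thesis
    unfolding clique_split_def
    using assms cycle_in_clones clones_complete_to_C5_disjoint complete_to_C5_clique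
      clone_adj_complete_to_C5 clone_not_adj_other by blast
qed

lemma C5_blowup_clones:
  assumes "clones = V"
  obtains q where "C5_blowup V E q"
proof -
  define q where "q v = (SOME i. i < 5 \<and> C5_clone E c v i)" for v
  have q: "q v < 5 \<and> C5_clone E c v (q v)" if "v \<in> V" for v
    using that assms unfolding q_def clones_def by (metis (mono_tags, lifting) mem_Collect_eq someI_ex)
  have "{x, y} \<in> E \<longleftrightarrow> C5_near (q x) (q y)" if "x \<in> V" "y \<in> V" "x \<noteq> y" for x y
  proof -
    have cx: "C5_clone E (\<lambda>k. c (k + q x)) x 0"
      using q[OF that(1)] C5_clone_shift by metis
    have cy: "C5_clone E (\<lambda>k. c (k + q x)) y ((q y + 5 - q x) mod 5)"
      using C5_clone_shift_to[OF induced_C5] q that by blast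
    have "(q y + 5 - q x) mod 5 < 5"
      by simp
    then have "{x, y} \<in> E \<longleftrightarrow> C5_near 0 ((q y + 5 - q x) mod 5)"
      using C5_in_P5_C4_free_graph.clones_adj_if_near[OF shift cx cy _ _ that(3,1,2)]
        C5_in_P5_C4_free_graph.clones_not_adj_if_far[OF shift cx cy _ _ that(1,2)] by blast
    then show ?thesis
      using C5_near_shift q that by simp
  qed
  then show thesis
    using q that unfolding C5_blowup_def by blast
qed

end

section \<open>Structure of \<open>(P\<^sub>5, C\<^sub>4)\<close>-free graphs\<close>

definition neighbours :: "'a set \<Rightarrow> 'a set set \<Rightarrow> 'a \<Rightarrow> 'a set" where
  "neighbours V E v = {w\<in>V. {v, w} \<in> E}"

definition closed_in :: "'a set set \<Rightarrow> 'a set \<Rightarrow> 'a set \<Rightarrow> bool" where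
  "closed_in E M D \<longleftrightarrow> D \<subseteq> M \<and> (\<forall>d\<in>D. \<forall>w\<in>M. {d, w} \<in> E \<longrightarrow> w \<in> D)"

definition minimal_closed_in :: "'a set set \<Rightarrow> 'a set \<Rightarrow> 'a set \<Rightarrow> bool" where
  "minimal_closed_in E M D \<longleftrightarrow> D \<noteq> {} \<and> closed_in E M D \<and>
     (\<forall>D'. D' \<noteq> {} \<longrightarrow> closed_in E M D' \<longrightarrow> D' \<subseteq> D \<longrightarrow> D' = D)"

lemma minimal_closed_in_exists:
  assumes "finite M" "M \<noteq> {}"
  obtains D where "minimal_closed_in E M D"
proof -
  let ?F = "{D. D \<noteq> {} \<and> closed_in E M D}"
  have "?F \<subseteq> Pow M"
    by (auto simp: closed_in_def)
  then have "finite ?F"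
    using assms(1) finite_subset by blast
  moreover have "M \<in> ?F"
    using assms(2) by (simp add: closed_in_def)
  ultimately obtain D where "D \<in> ?F" "\<forall>D'\<in>?F. D' \<subseteq> D \<longrightarrow> D = D'"
    using finite_has_minimal[of ?F] by blast
  then show thesis
    using that unfolding minimal_closed_in_def by blast
qed

lemma minimal_closed_in_minimal:
  "minimal_closed_in E M D \<Longrightarrow> D' \<noteq> {} \<Longrightarrow> closed_in E M D' \<Longrightarrow> D' \<subseteq> D \<Longrightarrow> D' = D"
  unfolding minimal_closed_in_def by blast

context P5_C4_free_graph
begin

lemma universal_vertex_split:
  assumes "x \<in> V" "V \<subseteq> insert x (neighbours V E x)" "2 \<le> card V"
  shows "clique_split V E (V - {x}) {x}"
proof -
  have "V \<noteq> {x}"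
    using assms(3) by auto
  then show ?thesis
    using assms(1,2) unfolding clique_split_def neighbours_def by (auto simp: insert_commute)
qed

text \<open>Otherwise, as \<open>x\<close> has maximum degree, some neighbour \<open>w'\<close> of \<open>x\<close> is not adjacent
  to \<open>s\<close>, and \<open>w d s x w'\<close> induces a \<open>C\<^sub>4\<close>, \<open>C\<^sub>5\<close> or \<open>P\<^sub>5\<close>.\<close>
lemma max_degree_nbr_absorbs:
  assumes no_C5: "\<not> has_induced V E 5 C5_adj"
    and x: "x \<in> V" "\<And>v. v \<in> V \<Longrightarrow> card (neighbours V E v) \<le> card (neighbours V E x)"
    and d: "d \<in> V" "d \<noteq> x" "{x, d} \<notin> E"
    and w: "w \<in> V" "w \<noteq> x" "{x, w} \<notin> E" "{d, w} \<in> E"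
    and s: "s \<in> V" "{x, s} \<in> E" "{s, d} \<in> E"
  shows "{s, w} \<in> E"
proof (rule ccontr)
  assume sw: "{s, w} \<notin> E"
  let ?N = "neighbours V E"
  obtain w' where w': "w' \<in> ?N x" "w' \<noteq> s" "{s, w'} \<notin> E"
  proof (rule ccontr)
    assume "\<not> thesis"
    then have "insert x (insert d (?N x - {s})) \<subseteq> ?N s"
      using that x(1) d(1) s unfolding neighbours_def by (auto simp: insert_commute)
    moreover have "x \<notin> ?N x" "d \<notin> ?N x" "s \<in> ?N x"
      using loopless d s unfolding neighbours_def loopless_def by auto
    moreover have "finite (?N v)" for v
      using finite_vertices unfolding neighbours_def by simp
    ultimately have "card (?N x) < card (?N s)"
      using card_mono[of "?N s" "insert x (insert d (?N x - {s}))"] d(2)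
      by (simp add: card.insert_remove)
    then show False
      using x(2)[OF s(1)] by simp
  qed
  have w'V: "w' \<in> V" "{x, w'} \<in> E"
    using w'(1) unfolding neighbours_def by auto
  have w'd: "{w', d} \<notin> E"
    using no_induced_C4[of w' d s x] x(1) w' w'V d s by (auto simp: insert_commute)
  have w'w: "{w', w} \<notin> E"
    using has_induced_C5I[OF loopless, of w V d s x w'] no_C5 x(1) w'V w' w'd d w s sw
    by (auto simp: insert_commute)
  show False
    using no_induced_P5[of w d s x w'] x(1) w'V w' w'd w'w d w s sw by (auto simp: insert_commute)
qed

lemma outer_nbr_of_closed_in_non_nbrs:
  assumes D: "closed_in E (V - insert x (neighbours V E x)) D" "d \<in> D"
    and s: "s \<in> V - D" "{s, d} \<in> E"
  shows "{x, s} \<in> E"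
proof -
  have "{x, d} \<notin> E"
    using D unfolding closed_in_def neighbours_def by auto
  then have "s \<noteq> x"
    using s(2) by (auto simp: insert_commute)
  moreover have "s \<notin> V - insert x (neighbours V E x)"
    using D s by (auto simp: closed_in_def insert_commute)
  ultimately show ?thesis
    using s(1) unfolding neighbours_def by auto
qed

lemma outer_nbr_complete_to_minimal_closed:
  assumes no_C5: "\<not> has_induced V E 5 C5_adj"
    and x: "x \<in> V" "\<And>v. v \<in> V \<Longrightarrow> card (neighbours V E v) \<le> card (neighbours V E x)"
    and D: "minimal_closed_in E (V - insert x (neighbours V E x)) D"
    and s: "s \<in> V - D" "d \<in> D" "{s, d} \<in> E"
  shows "D = {d'\<in>D. {s, d'} \<in> E}"
proof -
  let ?M = "V - insert x (neighbours V E x)"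
  have DM: "D \<subseteq> ?M" "\<And>d w. d \<in> D \<Longrightarrow> w \<in> ?M \<Longrightarrow> {d, w} \<in> E \<Longrightarrow> w \<in> D"
    using D unfolding minimal_closed_in_def closed_in_def by auto
  have xs: "{x, s} \<in> E"
    using outer_nbr_of_closed_in_non_nbrs D s unfolding minimal_closed_in_def by blast
  have "closed_in E ?M {d'\<in>D. {s, d'} \<in> E}"
    unfolding closed_in_def
  proof (intro conjI ballI impI)
    fix d' w assume d': "d' \<in> {d'\<in>D. {s, d'} \<in> E}" and w: "w \<in> ?M" "{d', w} \<in> E"
    have "d' \<in> ?M"
      using DM(1) d' by blast
    then have "{s, w} \<in> E"
      using max_degree_nbr_absorbs[OF no_C5 x, of d' w s] d' w xs s(1)
      unfolding neighbours_def by blast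
    then show "w \<in> {d'\<in>D. {s, d'} \<in> E}"
      using DM(2) d' w by blast
  qed (use DM(1) in blast)
  moreover have "{d'\<in>D. {s, d'} \<in> E} \<noteq> {}"
    using s by blast
  ultimately have "{d'\<in>D. {s, d'} \<in> E} = D"
    by (intro minimal_closed_in_minimal[OF D]) auto
  then show ?thesis
    by simp
qed

lemma common_nbrs_adj:
  assumes "x \<in> V" "d \<in> V" "s \<in> V" "t \<in> V" "x \<noteq> d" "s \<noteq> t" "{x, d} \<notin> E"
    and "{x, s} \<in> E" "{x, t} \<in> E" "{d, s} \<in> E" "{d, t} \<in> E"
  shows "{s, t} \<in> E"
  using no_induced_C4[of s d t x] assms by (auto simp: insert_commute)

lemma clique_split_at_max_degree:
  assumes no_C5: "\<not> has_induced V E 5 C5_adj"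
    and x: "x \<in> V" "\<And>v. v \<in> V \<Longrightarrow> card (neighbours V E v) \<le> card (neighbours V E x)"
    and not_universal: "\<not> V \<subseteq> insert x (neighbours V E x)"
  obtains B Y where "clique_split V E B Y"
proof -
  let ?M = "V - insert x (neighbours V E x)"
  obtain D where D: "minimal_closed_in E ?M D"
    using minimal_closed_in_exists[of ?M E] finite_vertices not_universal by blast
  then have DM: "D \<noteq> {}" "D \<subseteq> ?M"
    unfolding minimal_closed_in_def closed_in_def by auto
  define S where "S = {s\<in>V - D. \<exists>d\<in>D. {s, d} \<in> E}"
  have xS: "{x, s} \<in> E" if "s \<in> S" for s
    using outer_nbr_of_closed_in_non_nbrs D that unfolding S_def minimal_closed_in_def by blast
  have SD: "{d, s} \<in> E" if s: "s \<in> S" and d: "d \<in> D" for s d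
  proof -
    obtain d0 where "s \<in> V - D" "d0 \<in> D" "{s, d0} \<in> E"
      using s unfolding S_def by blast
    from outer_nbr_complete_to_minimal_closed[OF no_C5 x D this] have "{s, d} \<in> E"
      using d by blast
    then show ?thesis
      by (simp add: insert_commute)
  qed
  obtain d where d: "d \<in> D"
    using DM(1) by blast
  then have "{x, d} \<notin> E" "d \<noteq> x" "d \<in> V"
    using DM(2) unfolding neighbours_def by auto
  then have S_clique: "{s, t} \<in> E" if "s \<in> S" "t \<in> S" "s \<noteq> t" for s t
    using common_nbrs_adj[of x d s t] xS SD d x(1) that unfolding S_def by blast
  have D_nbrs: "{b, z} \<notin> E" if "b \<in> D" "z \<in> V - D - S" for b z
    using that insert_commute[of z b "{}"] unfolding S_def by auto
  have "D \<subset> V" "S \<subseteq> V - D"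
    using DM(2) x(1) unfolding S_def by blast+
  then have "clique_split V E D S"
    unfolding clique_split_def using DM(1) SD S_clique D_nbrs by blast
  then show thesis
    by (rule that)
qed

lemma clique_split_without_C5:
  assumes no_C5: "\<not> has_induced V E 5 C5_adj" and two: "2 \<le> card V"
  obtains B Y where "clique_split V E B Y"
proof -
  let ?d = "\<lambda>v. card (neighbours V E v)"
  have "Max (?d ` V) \<in> ?d ` V"
    using finite_vertices two by (intro Max_in) auto
  then obtain x where x: "x \<in> V" "?d x = Max (?d ` V)"
    by auto
  then have "?d v \<le> ?d x" if "v \<in> V" for v
    using finite_vertices that by simp
  then show thesis
    using that universal_vertex_split[OF x(1) _ two] clique_split_at_max_degree[OF no_C5 x(1)] by blast
qed

theorem clique_split_or_C5_blowup:
  assumes "2 \<le> card V"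
  shows "(\<exists>B Y. clique_split V E B Y) \<or>
    (\<exists>q. C5_blowup V E q) \<and> (\<exists>x\<in>V. \<exists>y\<in>V. x \<noteq> y \<and> {x, y} \<notin> E)"
proof (cases "has_induced V E 5 C5_adj")
  case True
  then obtain c where c: "induced_C5 V E c"
    by (rule has_induced_C5E)
  interpret C5_in_P5_C4_free_graph V E c
    by unfold_locales (rule c)
  have "c 0 \<noteq> c 2" "{c 0, c 2} \<notin> E"
    by (simp_all add: cycle)
  then show ?thesis
    using clique_split_clones C5_blowup_clones cycle(3) by metis
next
  case False
  then show ?thesis
    using clique_split_without_C5 assms by metis
qed

end

section \<open>Recolouring across a clique split\<close>

lemma card_diff_image_ge: "finite A \<Longrightarrow> card L - card A \<le> card (L - f ` A)"
  by (meson card_image_le diff_card_le_card_Diff diff_le_mono2 finite_imageI le_trans)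

context
  fixes V :: "'a set" and E :: "'a set set" and B Y :: "'a set"
  assumes finite_vertices: "finite V" and loopless: "loopless E" and split: "clique_split V E B Y"
begin

lemma split_facts:
  "B \<subseteq> V" "Y \<subseteq> V" "B \<inter> Y = {}" "finite Y"
  "\<And>y y'. y \<in> Y \<Longrightarrow> y' \<in> Y \<Longrightarrow> y \<noteq> y' \<Longrightarrow> {y, y'} \<in> E"
  "\<And>b y. b \<in> B \<Longrightarrow> y \<in> Y \<Longrightarrow> {b, y} \<in> E"
  "\<And>b z. b \<in> B \<Longrightarrow> z \<in> V \<Longrightarrow> z \<notin> B \<Longrightarrow> z \<notin> Y \<Longrightarrow> {b, z} \<notin> E"
  using split finite_vertices finite_subset unfolding clique_split_def by auto

lemma proper_colouring_override_split:
  assumes \<alpha>: "proper_colouring V E L \<alpha>" and \<sigma>: "proper_colouring B E L' \<sigma>"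
    and L': "L' \<subseteq> L" "L' \<inter> \<alpha> ` Y = {}"
  shows "proper_colouring V E L (override_on \<alpha> \<sigma> B)"
proof (rule proper_colouringI)
  have cross: "\<sigma> b \<noteq> \<alpha> w" if "b \<in> B" "w \<in> V" "w \<notin> B" "{b, w} \<in> E" for b w
    using split_facts(7)[of b w] that proper_colouring_in[OF \<sigma> that(1)] L'(2) by blast
  fix u v assume uv: "u \<in> V" "v \<in> V" "{u, v} \<in> E"
  then have vu: "{v, u} \<in> E"
    by (simp add: insert_commute)
  show "override_on \<alpha> \<sigma> B u \<noteq> override_on \<alpha> \<sigma> B v"
    using proper_colouring_adj[OF \<sigma>, of u v] proper_colouring_adj[OF \<alpha>, of u v] cross[of u v]
      cross[of v u] uv vu
    by (cases "u \<in> B"; cases "v \<in> B") auto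
qed (use L'(1) split_facts(1) proper_colouring_in[OF \<alpha>] proper_colouring_in[OF \<sigma>]
      proper_colouring_undefined[OF \<alpha>] in \<open>auto simp: override_on_def\<close>)

lemma recolour_reach_override_split:
  assumes \<alpha>: "proper_colouring V E L \<alpha>" and L': "L' \<subseteq> L" "L' \<inter> \<alpha> ` Y = {}"
    and "recolour_reach B E L' \<sigma> \<sigma>'"
  shows "recolour_reach V E L (override_on \<alpha> \<sigma> B) (override_on \<alpha> \<sigma>' B)"
proof (rule recolour_reach_map[OF proper_colouring_override_split[OF \<alpha> _ L'] _ assms(4)])
  fix \<tau> \<tau>' :: "'a \<Rightarrow> nat" and w
  assume "\<tau> w = \<tau>' w"
  then show "override_on \<alpha> \<tau> B w = override_on \<alpha> \<tau>' B w"
    by (simp add: override_on_def)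
qed

lemma restrict_colouring_avoids_split_clique:
  assumes \<alpha>: "proper_colouring V E L \<alpha>"
  shows "proper_colouring B E (L - \<alpha> ` Y) (restrict \<alpha> B)"
proof (rule proper_colouringI)
  fix v assume v: "v \<in> B"
  have "\<alpha> v \<noteq> \<alpha> y" if "y \<in> Y" for y
    using proper_colouring_adj[OF \<alpha>, of v y] split_facts(1,2,6) v that by auto
  then show "restrict \<alpha> B v \<in> L - \<alpha> ` Y"
    using v proper_colouring_in[OF \<alpha>] split_facts(1) by auto
qed (use split_facts(1) proper_colouring_adj[OF \<alpha>] in auto)

lemma chromatic_number_split: "chromatic_number B E + card Y \<le> chromatic_number V E"
proof -
  let ?k = "chromatic_number V E"
  obtain \<gamma> where \<gamma>: "proper_colouring V E {1..?k} \<gamma>"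
    using chromatic_number_colouring[OF finite_vertices loopless] by blast
  have "inj_on \<gamma> Y"
    using proper_colouring_adj[OF \<gamma>] split_facts(2,5) by (meson inj_onI subsetD)
  moreover have "\<gamma> ` Y \<subseteq> {1..?k}"
    using proper_colouring_in[OF \<gamma>] split_facts(2) by auto
  ultimately have "card ({1..?k} - \<gamma> ` Y) = ?k - card Y"
    by (simp add: card_Diff_subset card_image split_facts(4))
  moreover have "card Y \<le> ?k"
    using clique_card_le_chromatic_number[OF finite_vertices loopless split_facts(2,5)] .
  ultimately show ?thesis
    using chromatic_number_le_card[OF restrict_colouring_avoids_split_clique[OF \<gamma>]] by simp
qed

lemma card_colours_avoiding_split_clique:
  assumes "chromatic_number V E < card L"
  shows "chromatic_number B E < card (L - \<alpha> ` Y)"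
  using card_diff_image_ge[OF split_facts(4), of L \<alpha>] chromatic_number_split assms by linarith

context
  fixes L :: "nat set"
  assumes finite_colours: "finite L" and many_colours: "chromatic_number V E < card L"
    and mixing_B: "mixing B E"
begin

lemma recolour_reach_inside:
  assumes \<alpha>: "proper_colouring V E L \<alpha>" and \<beta>: "proper_colouring V E L \<beta>"
    and eq: "\<And>v. v \<notin> B \<Longrightarrow> \<alpha> v = \<beta> v"
  shows "recolour_reach V E L \<alpha> \<beta>"
proof -
  let ?L' = "L - \<alpha> ` Y"
  have "\<alpha> ` Y = \<beta> ` Y"
    using eq split_facts(3) by (intro image_cong) auto
  then have "proper_colouring B E ?L' (restrict \<beta> B)"
    using restrict_colouring_avoids_split_clique[OF \<beta>] by simp
  then have "recolour_reach B E ?L' (restrict \<alpha> B) (restrict \<beta> B)"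
    using mixing_B card_colours_avoiding_split_clique[OF many_colours] finite_colours
      restrict_colouring_avoids_split_clique[OF \<alpha>]
    unfolding mixing_def recolour_connected_def by blast
  from recolour_reach_override_split[OF \<alpha> _ _ this] have
    "recolour_reach V E L (override_on \<alpha> (restrict \<alpha> B) B) (override_on \<alpha> (restrict \<beta> B) B)"
    by auto
  moreover have "override_on \<alpha> (restrict \<alpha> B) B = \<alpha>" "override_on \<alpha> (restrict \<beta> B) B = \<beta>"
    using eq by (auto simp: override_on_def)
  ultimately show ?thesis
    by simp
qed

text \<open>The extra colour to avoid is available because \<open>\<chi>(B) + |Y| \<le> \<chi>(G) < |L|\<close>.\<close>
lemma recolour_inside_avoiding:
  assumes \<alpha>: "proper_colouring V E L \<alpha>"
  obtains \<alpha>' where "recolour_reach V E L \<alpha> \<alpha>'" "\<And>v. v \<notin> B \<Longrightarrow> \<alpha>' v = \<alpha> v"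
    "\<And>b. b \<in> B \<Longrightarrow> \<alpha>' b \<noteq> c"
proof -
  let ?L' = "L - \<alpha> ` Y"
  have "card ?L' - card {c} \<le> card (?L' - {c})"
    by (rule diff_card_le_card_Diff) simp
  then have "chromatic_number B E \<le> card (?L' - {c})"
    using card_colours_avoiding_split_clique[OF many_colours, of \<alpha>] by simp
  then obtain \<tau> where \<tau>: "proper_colouring B E (?L' - {c}) \<tau>"
    using proper_colouring_exists[of B E "?L' - {c}"] finite_vertices loopless finite_colours
      split_facts(1) finite_subset by blast
  have \<tau>': "proper_colouring B E ?L' \<tau>"
    using proper_colouring_colours_mono[OF \<tau>] proper_colouring_in[OF \<tau>] by blast
  have "recolour_reach B E ?L' (restrict \<alpha> B) \<tau>"
    using mixing_B card_colours_avoiding_split_clique[OF many_colours] finite_colours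
      restrict_colouring_avoids_split_clique[OF \<alpha>] \<tau>'
    unfolding mixing_def recolour_connected_def by blast
  from recolour_reach_override_split[OF \<alpha> _ _ this]
  have "recolour_reach V E L (override_on \<alpha> (restrict \<alpha> B) B) (override_on \<alpha> \<tau> B)"
    by blast
  moreover have "override_on \<alpha> (restrict \<alpha> B) B = \<alpha>"
    by (rule ext) (simp add: override_on_def)
  ultimately show thesis
    using that[of "override_on \<alpha> \<tau> B"] proper_colouring_in[OF \<tau>] by simp
qed

lemma lift_recolour_step:
  assumes step: "recolour_step (V - B) E L \<delta> \<delta>'"
    and \<alpha>: "proper_colouring V E L \<alpha>" and restr: "restrict \<alpha> (V - B) = \<delta>"
  obtains \<alpha>' where "recolour_reach V E L \<alpha> \<alpha>'" "restrict \<alpha>' (V - B) = \<delta>'"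
proof -
  obtain w where \<delta>: "proper_colouring (V - B) E L \<delta>" "proper_colouring (V - B) E L \<delta>'"
    and w: "\<forall>v. v \<noteq> w \<longrightarrow> \<delta> v = \<delta>' v"
    using step unfolding recolour_step_def by blast
  show thesis
  proof (cases "w \<in> V - B")
    case False
    then have "\<delta> = \<delta>'"
      using w proper_colouring_undefined[OF \<delta>(1)] proper_colouring_undefined[OF \<delta>(2)] by (metis ext)
    then show thesis
      using that restr by blast
  next
    case True
    let ?c = "\<delta>' w"
    obtain \<alpha>1 where r1: "recolour_reach V E L \<alpha> \<alpha>1" and outside: "\<And>v. v \<notin> B \<Longrightarrow> \<alpha>1 v = \<alpha> v"
      and inside: "\<And>b. b \<in> B \<Longrightarrow> \<alpha>1 b \<noteq> ?c"
      using recolour_inside_avoiding[OF \<alpha>] by blast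
    have "\<alpha>1 u \<noteq> ?c" if u: "u \<in> V" "{w, u} \<in> E" for u
    proof (cases "u \<in> B")
      case False
      have "u \<noteq> w"
        using loopless_edge_neq[OF loopless u(2)] by simp
      then have "\<alpha>1 u = \<delta>' u"
        using False w restr u(1) outside by (metis Diff_iff restrict_apply')
      then show ?thesis
        using proper_colouring_adj[OF \<delta>(2) True, of u] u False by auto
    qed (use inside in blast)
    then have r2: "recolour_reach V E L \<alpha>1 (\<alpha>1(w := ?c))"
      using recolour_reach_update[OF recolour_reach_colouring[OF r1 \<alpha>] _ proper_colouring_in[OF \<delta>(2) True]]
        True by blast
    have "restrict (\<alpha>1(w := ?c)) (V - B) = \<delta>'"
    proof
      fix v
      show "restrict (\<alpha>1(w := ?c)) (V - B) v = \<delta>' v"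
        using w restr outside[of v] proper_colouring_undefined[OF \<delta>(2), of v]
        by (cases "v \<in> V - B"; cases "v = w") (auto simp: restrict_def)
    qed
    then show thesis
      using that r1 r2 by (meson rtranclp_trans)
  qed
qed

lemma recolour_connected_split:
  assumes mixing_rest: "mixing (V - B) E"
  shows "recolour_connected V E L"
  unfolding recolour_connected_def
proof (intro allI impI)
  fix \<alpha> \<beta> assume \<alpha>: "proper_colouring V E L \<alpha>" and \<beta>: "proper_colouring V E L \<beta>"
  have "chromatic_number (V - B) E \<le> chromatic_number V E"
    using chromatic_number_mono[OF finite_vertices loopless] by auto
  then have "recolour_reach (V - B) E L (restrict \<alpha> (V - B)) (restrict \<beta> (V - B))"
    using mixing_rest finite_colours many_colours proper_colouring_restrict[OF \<alpha>]
      proper_colouring_restrict[OF \<beta>]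
    unfolding mixing_def recolour_connected_def by (meson Diff_subset le_less_trans)
  then have "\<exists>\<alpha>'. recolour_reach V E L \<alpha> \<alpha>' \<and> restrict \<alpha>' (V - B) = restrict \<beta> (V - B)"
  proof (induction rule: rtranclp_induct)
    case (step \<delta> \<delta>')
    then obtain \<alpha>'' where "recolour_reach V E L \<alpha> \<alpha>''" "restrict \<alpha>'' (V - B) = \<delta>"
      by blast
    moreover obtain \<alpha>' where "recolour_reach V E L \<alpha>'' \<alpha>'" "restrict \<alpha>' (V - B) = \<delta>'"
      using lift_recolour_step[OF step(2) recolour_reach_colouring[OF calculation(1) \<alpha>] calculation(2)] .
    ultimately show ?case
      using rtranclp_trans by metis
  qed auto
  then obtain \<alpha>' where \<alpha>': "recolour_reach V E L \<alpha> \<alpha>'" "restrict \<alpha>' (V - B) = restrict \<beta> (V - B)"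
    by blast
  have \<alpha>'_col: "proper_colouring V E L \<alpha>'"
    using recolour_reach_colouring[OF \<alpha>'(1) \<alpha>] .
  have "\<alpha>' v = \<beta> v" if "v \<notin> B" for v
    using fun_cong[OF \<alpha>'(2), of v] that proper_colouring_undefined[OF \<alpha>'_col]
      proper_colouring_undefined[OF \<beta>]
    by (cases "v \<in> V") auto
  then have "recolour_reach V E L \<alpha>' \<beta>"
    using recolour_reach_inside[OF \<alpha>'_col \<beta>] by blast
  then show "recolour_reach V E L \<alpha> \<beta>"
    using \<alpha>'(1) by (meson rtranclp_trans)
qed

end

end

lemma mixing_clique_split:
  assumes "finite V" "loopless E" "clique_split V E B Y" "mixing B E" "mixing (V - B) E"
  shows "mixing V E"
  using recolour_connected_split[OF assms(1-3) _ _ assms(4,5)] unfolding mixing_def by blast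

section \<open>Colourings with a pair class and a spare colour\<close>

definition pair_class :: "'a set \<Rightarrow> 'a set set \<Rightarrow> nat set \<Rightarrow> ('a \<Rightarrow> nat) \<Rightarrow> 'a \<Rightarrow> 'a \<Rightarrow> bool" where
  "pair_class V E L \<sigma> u v \<longleftrightarrow> proper_colouring V E L \<sigma> \<and> u \<noteq> v \<and> u \<in> V \<and> v \<in> V \<and> \<sigma> u = \<sigma> v \<and>
     (\<forall>w\<in>V. \<sigma> w = \<sigma> u \<longrightarrow> w = u \<or> w = v)"

definition pair_spare_colouring :: "'a set \<Rightarrow> 'a set set \<Rightarrow> nat set \<Rightarrow> ('a \<Rightarrow> nat) \<Rightarrow> bool" where
  "pair_spare_colouring V E L \<sigma> \<longleftrightarrow> (\<exists>u v. pair_class V E L \<sigma> u v) \<and> (\<exists>b\<in>L. b \<notin> \<sigma> ` V)"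

definition admissible_pair :: "'a set \<Rightarrow> 'a set set \<Rightarrow> nat set \<Rightarrow> 'a \<Rightarrow> 'a \<Rightarrow> bool" where
  "admissible_pair V E L u v \<longleftrightarrow> u \<noteq> v \<and> u \<in> V \<and> v \<in> V \<and> {u, v} \<notin> E \<and>
     chromatic_number (V - {u, v}) E + 2 \<le> card L"

lemma pair_class_cong:
  "{u, v} = {u', v'} \<Longrightarrow> pair_class V E L \<sigma> u v \<longleftrightarrow> pair_class V E L \<sigma> u' v'"
  unfolding pair_class_def doubleton_eq_iff by auto

lemma admissible_pair_cong:
  "{u, v} = {u', v'} \<Longrightarrow> admissible_pair V E L u v \<longleftrightarrow> admissible_pair V E L u' v'"
  unfolding admissible_pair_def doubleton_eq_iff by (auto simp: insert_commute)

lemma pair_class_restrict: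
  assumes "pair_class V E L \<sigma> u v"
  shows "proper_colouring (V - {u, v}) E (L - {\<sigma> u}) (restrict \<sigma> (V - {u, v}))"
proof -
  have \<sigma>: "proper_colouring V E L \<sigma>"
    using assms unfolding pair_class_def by blast
  show ?thesis
  proof (rule proper_colouringI)
    fix w assume "w \<in> V - {u, v}"
    then show "restrict \<sigma> (V - {u, v}) w \<in> L - {\<sigma> u}"
      using assms proper_colouring_in[OF \<sigma>] unfolding pair_class_def by auto
  qed (use proper_colouring_adj[OF \<sigma>] in auto)
qed

lemma pair_class_eq_override:
  assumes "pair_class V E L \<sigma> u v"
  shows "override_on (restrict \<sigma> (V - {u, v})) (\<lambda>_. \<sigma> u) {u, v} = \<sigma>"
proof
  fix w
  have "proper_colouring V E L \<sigma>"
    using assms unfolding pair_class_def by blast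
  then show "override_on (restrict \<sigma> (V - {u, v})) (\<lambda>_. \<sigma> u) {u, v} w = \<sigma> w"
    using assms proper_colouring_undefined unfolding pair_class_def override_on_def by fastforce
qed

lemma proper_colouring_pair_override:
  assumes "u \<in> V" "v \<in> V" "{u, v} \<notin> E" "loopless E"
    and \<tau>: "proper_colouring (V - {u, v}) E (L - {a}) \<tau>" and "a \<in> L"
  shows "proper_colouring V E L (override_on \<tau> (\<lambda>_. a) {u, v})"
proof (rule proper_colouringI)
  fix x y assume xy: "x \<in> V" "y \<in> V" "{x, y} \<in> E"
  then have "\<not> (x \<in> {u, v} \<and> y \<in> {u, v})"
    using assms(3) loopless_edge_neq[OF assms(4)] by (auto simp: insert_commute)
  then show "override_on \<tau> (\<lambda>_. a) {u, v} x \<noteq> override_on \<tau> (\<lambda>_. a) {u, v} y"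
    using xy proper_colouring_in[OF \<tau>] proper_colouring_adj[OF \<tau>] by (auto simp: override_on_def)
qed (use assms proper_colouring_in[OF \<tau>] proper_colouring_undefined[OF \<tau>] in
      \<open>auto simp: override_on_def\<close>)

lemma recolour_reach_pair_override:
  assumes "u \<in> V" "v \<in> V" "{u, v} \<notin> E" "loopless E" "a \<in> L"
    and "recolour_reach (V - {u, v}) E (L - {a}) \<tau> \<tau>'"
  shows "recolour_reach V E L (override_on \<tau> (\<lambda>_. a) {u, v}) (override_on \<tau>' (\<lambda>_. a) {u, v})"
proof (rule recolour_reach_map[OF proper_colouring_pair_override[OF assms(1-4) _ assms(5)] _ assms(6)])
  fix \<tau>1 \<tau>2 :: "'a \<Rightarrow> nat" and w
  assume "\<tau>1 w = \<tau>2 w"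
  then show "override_on \<tau>1 (\<lambda>_. a) {u, v} w = override_on \<tau>2 (\<lambda>_. a) {u, v} w"
    by (simp add: override_on_def)
qed

lemma card_Diff_two:
  assumes "finite L" "a \<in> L" "b \<in> L" "a \<noteq> b"
  shows "card (L - {a, b}) + 2 = card L"
proof -
  have "card {a, b} \<le> card L"
    using assms by (intro card_mono) auto
  then show ?thesis
    using assms by (simp add: card_Diff_subset)
qed

lemma proper_colouring_extend:
  assumes "finite V" "loopless E" "finite L" "P \<subseteq> V" "Lp \<subseteq> L"
    and g: "\<And>w. w \<in> P \<Longrightarrow> g w \<in> Lp"
    and g_adj: "\<And>x y. x \<in> P \<Longrightarrow> y \<in> P \<Longrightarrow> {x, y} \<in> E \<Longrightarrow> g x \<noteq> g y"
    and "chromatic_number (V - P) E \<le> card (L - Lp)"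
  obtains \<rho> where "proper_colouring V E L \<rho>" "\<And>w. w \<in> P \<Longrightarrow> \<rho> w = g w"
    "\<And>w. w \<in> V - P \<Longrightarrow> \<rho> w \<in> L - Lp"
proof -
  obtain \<tau> where \<tau>: "proper_colouring (V - P) E (L - Lp) \<tau>"
    using proper_colouring_exists[of "V - P" E "L - Lp"] assms(1-3,8) by auto
  let ?\<rho> = "override_on \<tau> g P"
  have "proper_colouring V E L ?\<rho>"
  proof (rule proper_colouringI)
    fix x y assume xy: "x \<in> V" "y \<in> V" "{x, y} \<in> E"
    show "?\<rho> x \<noteq> ?\<rho> y"
      using g_adj[of x y] xy g[of x] g[of y] proper_colouring_in[OF \<tau>, of x]
        proper_colouring_in[OF \<tau>, of y] proper_colouring_adj[OF \<tau>, of x y]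
      by (cases "x \<in> P"; cases "y \<in> P") (auto simp: override_on_def)
  qed (use assms(4,5) g proper_colouring_in[OF \<tau>] proper_colouring_undefined[OF \<tau>] in
        \<open>auto simp: override_on_def\<close>)
  then show thesis
    using that proper_colouring_in[OF \<tau>] by (simp add: override_on_def)
qed

context
  fixes V :: "'a set" and E :: "'a set set" and L :: "nat set"
  assumes finite_vertices: "finite V" and loopless: "loopless E" and finite_colours: "finite L"
begin

lemma recolour_reach_pair_switch:
  assumes uv: "u \<in> V" "v \<in> V" "{u, v} \<notin> E"
    and \<tau>: "proper_colouring (V - {u, v}) E (L - {a1, a2}) \<tau>" and a: "a1 \<in> L" "a2 \<in> L"
  shows "recolour_reach V E L (override_on \<tau> (\<lambda>_. a1) {u, v}) (override_on \<tau> (\<lambda>_. a2) {u, v})"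
proof -
  let ?ext = "\<lambda>a. override_on \<tau> (\<lambda>_. a) {u, v}"
  have "\<tau> ` (V - {u, v}) \<subseteq> L - {a1}"
    using proper_colouring_in[OF \<tau>] by auto
  then have e1: "proper_colouring V E L (?ext a1)"
    using proper_colouring_pair_override[OF uv loopless _ a(1)] proper_colouring_colours_mono[OF \<tau>]
    by blast
  have nbrs_avoid: "w \<notin> {u, v}" "?ext a w \<noteq> a2" if "w \<in> V" "{x, w} \<in> E" "x \<in> {u, v}" for w x a
  proof -
    show "w \<notin> {u, v}"
      using that uv(3) loopless_edge_neq[OF loopless] by (auto simp: insert_commute)
    then show "?ext a w \<noteq> a2"
      using proper_colouring_in[OF \<tau>, of w] that(1) by (auto simp: override_on_def)
  qed
  have m1: "recolour_reach V E L (?ext a1) ((?ext a1)(u := a2))"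
    using recolour_reach_update[OF e1 uv(1) a(2)] nbrs_avoid(2)[of _ u] by blast
  have "((?ext a1)(u := a2)) w \<noteq> a2" if "w \<in> V" "{v, w} \<in> E" for w
    using nbrs_avoid(1)[of w v] nbrs_avoid(2)[of w v a1] that by auto
  then have "recolour_reach V E L ((?ext a1)(u := a2)) ((?ext a1)(u := a2, v := a2))"
    using recolour_reach_update[OF recolour_reach_colouring[OF m1 e1] uv(2) a(2)] by blast
  moreover have "(?ext a1)(u := a2, v := a2) = ?ext a2"
    by (rule ext) (simp add: override_on_def)
  ultimately show ?thesis
    using m1 by (metis rtranclp_trans)
qed

text \<open>Up to recolouring \<open>G - {u, v}\<close> by induction, both colourings agree with ones in which
  \<open>G - {u, v}\<close> avoids both colours of the pair.\<close>
lemma recolour_reach_pair_class: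
  assumes pair: "admissible_pair V E L u v" and mixing: "mixing (V - {u, v}) E"
    and \<sigma>1: "pair_class V E L \<sigma>1 u v" and \<sigma>2: "pair_class V E L \<sigma>2 u v"
  shows "recolour_reach V E L \<sigma>1 \<sigma>2"
proof -
  let ?R = "V - {u, v}" and ?a1 = "\<sigma>1 u" and ?a2 = "\<sigma>2 u"
  have uv: "u \<in> V" "v \<in> V" "{u, v} \<notin> E"
    using pair unfolding admissible_pair_def by auto
  have a: "?a1 \<in> L" "?a2 \<in> L"
    using \<sigma>1 \<sigma>2 unfolding pair_class_def by (auto intro: proper_colouring_in)
  have "card L - card {?a1, ?a2} \<le> card (L - {?a1, ?a2})"
    by (rule diff_card_le_card_Diff) simp
  moreover have "card {?a1, ?a2} \<le> 2"
    by (rule card_insert_le_m1) auto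
  ultimately have "chromatic_number ?R E \<le> card (L - {?a1, ?a2})"
    using pair unfolding admissible_pair_def by linarith
  then obtain \<tau> where \<tau>: "proper_colouring ?R E (L - {?a1, ?a2}) \<tau>"
    using proper_colouring_exists[of ?R E "L - {?a1, ?a2}"] finite_vertices loopless finite_colours
    by blast
  have "\<tau> ` ?R \<subseteq> L - {?a1}" "\<tau> ` ?R \<subseteq> L - {?a2}"
    using proper_colouring_in[OF \<tau>] by auto
  then have \<tau>1: "proper_colouring ?R E (L - {?a1}) \<tau>" and \<tau>2: "proper_colouring ?R E (L - {?a2}) \<tau>"
    using proper_colouring_colours_mono[OF \<tau>] by blast+
  have more: "chromatic_number ?R E < card (L - {?a1})" "chromatic_number ?R E < card (L - {?a2})"
    using pair a finite_colours unfolding admissible_pair_def by auto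
  have "recolour_reach ?R E (L - {?a1}) (restrict \<sigma>1 ?R) \<tau>"
    using mixing more(1) finite_colours pair_class_restrict[OF \<sigma>1] \<tau>1
    unfolding mixing_def recolour_connected_def by blast
  from recolour_reach_pair_override[OF uv loopless a(1) this]
  have r1: "recolour_reach V E L \<sigma>1 (override_on \<tau> (\<lambda>_. ?a1) {u, v})"
    using pair_class_eq_override[OF \<sigma>1] by simp
  have "recolour_reach ?R E (L - {?a2}) \<tau> (restrict \<sigma>2 ?R)"
    using mixing more(2) finite_colours pair_class_restrict[OF \<sigma>2] \<tau>2
    unfolding mixing_def recolour_connected_def by blast
  from recolour_reach_pair_override[OF uv loopless a(2) this]
  have r3: "recolour_reach V E L (override_on \<tau> (\<lambda>_. ?a2) {u, v}) \<sigma>2"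
    using pair_class_eq_override[OF \<sigma>2] by simp
  show ?thesis
    using r1 recolour_reach_pair_switch[OF uv \<tau> a] r3 by (meson rtranclp_trans)
qed

lemma admissible_pair_if_spare:
  assumes \<sigma>: "pair_class V E L \<sigma> u v" and b: "b \<in> L" "b \<notin> \<sigma> ` V"
  shows "admissible_pair V E L u v"
proof -
  have col: "proper_colouring V E L \<sigma>" and uv: "u \<noteq> v" "u \<in> V" "v \<in> V" "\<sigma> u = \<sigma> v"
    using \<sigma> unfolding pair_class_def by auto
  let ?R = "V - {u, v}"
  have "proper_colouring ?R E (L - {\<sigma> u, b}) (restrict \<sigma> ?R)"
  proof (rule proper_colouringI)
    fix w assume w: "w \<in> ?R"
    then show "restrict \<sigma> ?R w \<in> L - {\<sigma> u, b}"
      using \<sigma> b proper_colouring_in[OF col, of w] unfolding pair_class_def by auto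
  qed (use proper_colouring_adj[OF col] in auto)
  then have "chromatic_number ?R E \<le> card (L - {\<sigma> u, b})"
    using chromatic_number_le_card finite_colours by blast
  moreover have "card (L - {\<sigma> u, b}) + 2 = card L"
    using card_Diff_two[OF finite_colours] b uv proper_colouring_in[OF col] by blast
  moreover have "{u, v} \<notin> E"
    using proper_colouring_adj[OF col] uv by blast
  ultimately show ?thesis
    unfolding admissible_pair_def using uv by linarith
qed

lemma admissible_pair_two_colours:
  assumes "admissible_pair V E L u v"
  obtains a b where "a \<in> L" "b \<in> L" "a \<noteq> b"
proof -
  have "1 < card L"
    using assms unfolding admissible_pair_def by linarith
  then show thesis
    using that by (metis card_le_Suc0_iff_eq finite_colours not_le One_nat_def)
qed

text \<open>Admissibility gives \<open>\<chi>(G - P) \<le> \<chi>(G - {u, v}) \<le> |L| - 2\<close>, so the rest of the graph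
  can be coloured avoiding \<open>a\<close> and \<open>b\<close>.\<close>
lemma two_colour_extension:
  assumes pair: "admissible_pair V E L u v" and P: "{u, v} \<subseteq> P" "P \<subseteq> V"
    and ab: "a \<in> L" "b \<in> L" "a \<noteq> b"
    and g: "\<And>w. w \<in> P \<Longrightarrow> g w \<in> {a, b}"
    and g_adj: "\<And>x y. x \<in> P \<Longrightarrow> y \<in> P \<Longrightarrow> {x, y} \<in> E \<Longrightarrow> g x \<noteq> g y"
  shows "\<exists>\<rho>. proper_colouring V E L \<rho> \<and> (\<forall>w\<in>V. \<forall>c\<in>{a, b}. \<rho> w = c \<longleftrightarrow> w \<in> P \<and> g w = c)"
proof -
  have "chromatic_number (V - P) E \<le> chromatic_number (V - {u, v}) E"
    using chromatic_number_mono[OF _ loopless] finite_vertices P by (meson Diff_mono finite_Diff order_refl)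
  moreover have "card (L - {a, b}) + 2 = card L"
    using card_Diff_two[OF finite_colours ab] .
  ultimately have colours: "chromatic_number (V - P) E \<le> card (L - {a, b})"
    using pair unfolding admissible_pair_def by linarith
  obtain \<rho> where \<rho>: "proper_colouring V E L \<rho>" "\<And>w. w \<in> P \<Longrightarrow> \<rho> w = g w"
    "\<And>w. w \<in> V - P \<Longrightarrow> \<rho> w \<in> L - {a, b}"
    by (rule proper_colouring_extend[OF finite_vertices loopless finite_colours P(2) _ g g_adj colours])
      (use ab in auto)
  have "\<rho> w = c \<longleftrightarrow> w \<in> P \<and> g w = c" if "w \<in> V" "c \<in> {a, b}" for w c
    using \<rho>(2)[of w] \<rho>(3)[of w] that by (cases "w \<in> P") auto
  then show ?thesis
    using \<rho>(1) by blast
qed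

lemma pair_classes_disjoint_pairs:
  assumes p1: "admissible_pair V E L u1 v1" and p2: "admissible_pair V E L u2 v2"
    and disj: "{u1, v1} \<inter> {u2, v2} = {}"
  obtains \<rho> where "pair_class V E L \<rho> u1 v1" "pair_class V E L \<rho> u2 v2"
proof -
  obtain a b where ab: "a \<in> L" "b \<in> L" "a \<noteq> b"
    using admissible_pair_two_colours[OF p1] .
  have uv: "u1 \<noteq> v1" "u1 \<in> V" "v1 \<in> V" "{u1, v1} \<notin> E" "u2 \<noteq> v2" "u2 \<in> V" "v2 \<in> V" "{u2, v2} \<notin> E"
    using p1 p2 unfolding admissible_pair_def by auto
  define P g where "P = {u1, v1, u2, v2}" and "g w = (if w \<in> {u1, v1} then a else b)" for w
  have g_adj: "g x \<noteq> g y" if "x \<in> P" "y \<in> P" "{x, y} \<in> E" for x y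
    using that uv ab(3) loopless_edge_neq[OF loopless] by (auto simp: P_def g_def insert_commute)
  have P: "{u1, v1} \<subseteq> P" "P \<subseteq> V" and g: "\<And>w. w \<in> P \<Longrightarrow> g w \<in> {a, b}"
    using uv by (auto simp: P_def g_def)
  obtain \<rho> where \<rho>: "proper_colouring V E L \<rho>"
    "\<forall>w\<in>V. \<forall>c\<in>{a, b}. \<rho> w = c \<longleftrightarrow> w \<in> P \<and> g w = c"
    using two_colour_extension[where P = P and g = g, OF p1 P ab g g_adj] by blast
  have "\<rho> w = a \<longleftrightarrow> w = u1 \<or> w = v1" "\<rho> w = b \<longleftrightarrow> w = u2 \<or> w = v2" if "w \<in> V" for w
    using \<rho>(2) that ab(3) disj by (auto simp: P_def g_def)
  then have "pair_class V E L \<rho> u1 v1" "pair_class V E L \<rho> u2 v2"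
    unfolding pair_class_def using \<rho>(1) uv by auto
  then show thesis
    by (rule that)
qed

lemma pair_classes_shared_vertex:
  assumes p1: "admissible_pair V E L u v1" and p2: "admissible_pair V E L u v2" and "v1 \<noteq> v2"
  obtains \<rho> \<rho>' where "pair_class V E L \<rho> u v1" "pair_class V E L \<rho>' u v2"
    "recolour_reach V E L \<rho> \<rho>'"
proof -
  obtain a b where ab: "a \<in> L" "b \<in> L" "a \<noteq> b"
    using admissible_pair_two_colours[OF p1] .
  have uv: "u \<noteq> v1" "u \<in> V" "v1 \<in> V" "{u, v1} \<notin> E" "u \<noteq> v2" "v2 \<in> V" "{u, v2} \<notin> E" "v1 \<noteq> v2"
    using p1 p2 \<open>v1 \<noteq> v2\<close> unfolding admissible_pair_def by auto
  define P g where "P = {u, v1, v2}" and "g w = (if w = v2 then b else a)" for w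
  have g_adj: "g x \<noteq> g y" if "x \<in> P" "y \<in> P" "{x, y} \<in> E" for x y
    using that uv ab(3) loopless_edge_neq[OF loopless] by (auto simp: P_def g_def insert_commute)
  have P: "{u, v1} \<subseteq> P" "P \<subseteq> V" and g: "\<And>w. w \<in> P \<Longrightarrow> g w \<in> {a, b}"
    using uv by (auto simp: P_def g_def)
  obtain \<rho> where \<rho>: "proper_colouring V E L \<rho>"
    "\<forall>w\<in>V. \<forall>c\<in>{a, b}. \<rho> w = c \<longleftrightarrow> w \<in> P \<and> g w = c"
    using two_colour_extension[where P = P and g = g, OF p1 P ab g g_adj] by blast
  have \<rho>ab: "\<rho> w = a \<longleftrightarrow> w = u \<or> w = v1" "\<rho> w = b \<longleftrightarrow> w = v2" if "w \<in> V" for w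
    using \<rho>(2) that ab(3) uv by (auto simp: P_def g_def)
  have "\<rho> w \<noteq> b" if "w \<in> V" "{u, w} \<in> E" for w
    using that \<rho>ab(2)[OF that(1)] uv(7) by auto
  then have step: "recolour_reach V E L \<rho> (\<rho>(u := b))"
    using recolour_reach_update[OF \<rho>(1) uv(2) ab(2)] by blast
  have "pair_class V E L \<rho> u v1"
    unfolding pair_class_def using \<rho>(1) \<rho>ab uv by auto
  moreover have "pair_class V E L (\<rho>(u := b)) u v2"
    unfolding pair_class_def using recolour_reach_colouring[OF step \<rho>(1)] \<rho>ab uv by auto
  ultimately show thesis
    using that step by blast
qed

lemma pair_classes_linked:
  assumes p1: "admissible_pair V E L u1 v1" and p2: "admissible_pair V E L u2 v2"
    and ne: "{u1, v1} \<noteq> {u2, v2}"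
  obtains \<rho> \<rho>' where "pair_class V E L \<rho> u1 v1" "pair_class V E L \<rho>' u2 v2"
    "recolour_reach V E L \<rho> \<rho>'"
proof (cases "{u1, v1} \<inter> {u2, v2} = {}")
  case True
  then show thesis
    using pair_classes_disjoint_pairs[OF p1 p2] that by blast
next
  case False
  then obtain w x y where wxy: "{u1, v1} = {w, x}" "{u2, v2} = {w, y}" "x \<noteq> y"
    using ne by blast
  have "admissible_pair V E L w x" "admissible_pair V E L w y"
    using p1 p2 admissible_pair_cong[OF wxy(1)] admissible_pair_cong[OF wxy(2)] by simp_all
  then obtain \<rho> \<rho>' where "pair_class V E L \<rho> w x" "pair_class V E L \<rho>' w y"
    "recolour_reach V E L \<rho> \<rho>'"
    using pair_classes_shared_vertex[OF _ _ wxy(3)] by blast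
  then show thesis
    using that pair_class_cong[OF wxy(1)] pair_class_cong[OF wxy(2)] by simp
qed

lemma recolour_reach_pair_spare_colourings:
  assumes mixing: "\<And>R. R \<subset> V \<Longrightarrow> mixing R E"
    and \<sigma>1: "pair_spare_colouring V E L \<sigma>1" and \<sigma>2: "pair_spare_colouring V E L \<sigma>2"
  shows "recolour_reach V E L \<sigma>1 \<sigma>2"
proof -
  obtain u1 v1 b1 where s1: "pair_class V E L \<sigma>1 u1 v1" and b1: "b1 \<in> L" "b1 \<notin> \<sigma>1 ` V"
    using \<sigma>1 unfolding pair_spare_colouring_def by blast
  obtain u2 v2 b2 where s2: "pair_class V E L \<sigma>2 u2 v2" and b2: "b2 \<in> L" "b2 \<notin> \<sigma>2 ` V"
    using \<sigma>2 unfolding pair_spare_colouring_def by blast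
  have p1: "admissible_pair V E L u1 v1" and p2: "admissible_pair V E L u2 v2"
    using admissible_pair_if_spare s1 s2 b1 b2 by blast+
  have within_pair: "recolour_reach V E L \<rho> \<rho>'"
    if "admissible_pair V E L u v" "pair_class V E L \<rho> u v" "pair_class V E L \<rho>' u v" for u v \<rho> \<rho>'
  proof (rule recolour_reach_pair_class[OF that(1) _ that(2,3)])
    have "V - {u, v} \<subset> V"
      using that(1) unfolding admissible_pair_def by blast
    then show "mixing (V - {u, v}) E"
      by (rule mixing)
  qed
  show ?thesis
  proof (cases "{u1, v1} = {u2, v2}")
    case True
    then have "pair_class V E L \<sigma>2 u1 v1"
      using s2 pair_class_cong[OF True] by simp
    then show ?thesis
      by (rule within_pair[OF p1 s1])
  next
    case False
    then obtain \<rho> \<rho>' where "pair_class V E L \<rho> u1 v1" "pair_class V E L \<rho>' u2 v2"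
      "recolour_reach V E L \<rho> \<rho>'"
      using pair_classes_linked[OF p1 p2] by blast
    then show ?thesis
      using within_pair[OF p1 s1] within_pair[OF p2 _ s2] by (meson rtranclp_trans)
  qed
qed

end

section \<open>Graphs without independent triples\<close>

definition singletons :: "'a set \<Rightarrow> ('a \<Rightarrow> nat) \<Rightarrow> 'a set" where
  "singletons V \<alpha> = {x\<in>V. \<forall>y\<in>V. \<alpha> y = \<alpha> x \<longrightarrow> y = x}"

definition no_independent_triple :: "'a set \<Rightarrow> 'a set set \<Rightarrow> bool" where
  "no_independent_triple V E \<longleftrightarrow> (\<forall>x\<in>V. \<forall>y\<in>V. \<forall>z\<in>V.
     x \<noteq> y \<and> y \<noteq> z \<and> x \<noteq> z \<longrightarrow> {x, y} \<in> E \<or> {y, z} \<in> E \<or> {x, z} \<in> E)"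

lemma colour_class_at_most_two:
  assumes "no_independent_triple V E" "proper_colouring V E L \<alpha>"
    and "x \<in> V" "y \<in> V" "z \<in> V" "\<alpha> x = \<alpha> y" "\<alpha> y = \<alpha> z"
  shows "x = y \<or> y = z \<or> x = z"
  using assms proper_colouring_adj[OF assms(2)] unfolding no_independent_triple_def by metis

lemma pair_class_of_shared_colour:
  assumes "no_independent_triple V E" "proper_colouring V E L \<alpha>"
    and "u \<in> V" "v \<in> V" "u \<noteq> v" "\<alpha> u = \<alpha> v"
  shows "pair_class V E L \<alpha> u v"
  unfolding pair_class_def using assms colour_class_at_most_two[OF assms(1,2)] by metis

lemma clique_misses_colour:
  assumes "finite V" "loopless E" "finite L" "chromatic_number V E < card L"
    and \<alpha>: "proper_colouring V E L \<alpha>" and K: "K \<subseteq> V" "\<And>x y. x \<in> K \<Longrightarrow> y \<in> K \<Longrightarrow> x \<noteq> y \<Longrightarrow> {x, y} \<in> E"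
  obtains c where "c \<in> L" "c \<notin> \<alpha> ` K"
proof -
  have "card (\<alpha> ` K) \<le> card K"
    using K(1) assms(1) card_image_le finite_subset by blast
  also have "\<dots> \<le> chromatic_number V E"
    using clique_card_le_chromatic_number[OF assms(1,2) K] .
  finally have le: "card (\<alpha> ` K) \<le> chromatic_number V E" .
  have "\<not> L \<subseteq> \<alpha> ` K"
  proof
    assume "L \<subseteq> \<alpha> ` K"
    moreover have "finite (\<alpha> ` K)"
      using K(1) assms(1) finite_subset by blast
    ultimately have "card L \<le> card (\<alpha> ` K)"
      by (rule card_mono[rotated])
    then show False
      using le assms(4) by linarith
  qed
  then show thesis
    using that by blast
qed

lemma update_to_singleton_colour:
  assumes \<alpha>: "proper_colouring V E L \<alpha>" and y: "y \<in> singletons V \<alpha>"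
    and x: "x \<in> V" "x \<noteq> y" "{x, y} \<notin> E"
  shows "recolour_reach V E L \<alpha> (\<alpha>(x := \<alpha> y))" "pair_class V E L (\<alpha>(x := \<alpha> y)) x y"
proof -
  have yV: "y \<in> V" and y_only: "\<And>w. w \<in> V \<Longrightarrow> \<alpha> w = \<alpha> y \<Longrightarrow> w = y"
    using y unfolding singletons_def by auto
  have "\<alpha> w \<noteq> \<alpha> y" if "w \<in> V" "{x, w} \<in> E" for w
    using that x(3) y_only by blast
  then show step: "recolour_reach V E L \<alpha> (\<alpha>(x := \<alpha> y))"
    using recolour_reach_update[OF \<alpha> x(1) proper_colouring_in[OF \<alpha> yV]] by blast
  show "pair_class V E L (\<alpha>(x := \<alpha> y)) x y"
    unfolding pair_class_def using recolour_reach_colouring[OF step \<alpha>] x yV y_only by auto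
qed

lemma reach_pair_spare_if_spare_colour:
  assumes "no_independent_triple V E" and \<alpha>: "proper_colouring V E L \<alpha>"
    and b: "b \<in> L" "b \<notin> \<alpha> ` V" and noncomplete: "x \<in> V" "y \<in> V" "x \<noteq> y" "{x, y} \<notin> E"
  obtains \<sigma> where "recolour_reach V E L \<alpha> \<sigma>" "pair_spare_colouring V E L \<sigma>"
proof (cases "\<exists>u\<in>V. \<exists>v\<in>V. u \<noteq> v \<and> \<alpha> u = \<alpha> v")
  case True
  then have "pair_spare_colouring V E L \<alpha>"
    unfolding pair_spare_colouring_def using pair_class_of_shared_colour[OF assms(1,2)] b by blast
  then show thesis
    using that by blast
next
  case False
  then have "y \<in> singletons V \<alpha>"
    using noncomplete(2) unfolding singletons_def by blast
  note step = update_to_singleton_colour[OF \<alpha> this noncomplete(1,3,4)]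
  moreover have "b \<notin> (\<alpha>(x := \<alpha> y)) ` V"
    using b noncomplete(2) by auto
  ultimately show thesis
    using that b(1) unfolding pair_spare_colouring_def by blast
qed

lemma reach_pair_spare_if_singletons_nonadjacent:
  assumes \<alpha>: "proper_colouring V E L \<alpha>" and xy: "x \<in> singletons V \<alpha>" "y \<in> singletons V \<alpha>"
    "x \<noteq> y" "{x, y} \<notin> E"
  obtains \<sigma> where "recolour_reach V E L \<alpha> \<sigma>" "pair_spare_colouring V E L \<sigma>"
proof -
  have xV: "x \<in> V" and x_only: "\<And>w. w \<in> V \<Longrightarrow> \<alpha> w = \<alpha> x \<Longrightarrow> w = x"
    using xy(1) unfolding singletons_def by auto
  note step = update_to_singleton_colour[OF \<alpha> xy(2) xV xy(3,4)]
  moreover have "(\<alpha>(x := \<alpha> y)) w \<noteq> \<alpha> x" if "w \<in> V" for w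
    using x_only[OF that] x_only[of y] xy(2,3) unfolding singletons_def by (cases "w = x") auto
  then have "\<alpha> x \<notin> (\<alpha>(x := \<alpha> y)) ` V"
    by (metis imageE)
  ultimately show thesis
    using that proper_colouring_in[OF \<alpha> xV] unfolding pair_spare_colouring_def by blast
qed

lemma card_le_two_if_no_three:
  assumes "finite A" "\<And>x y z. x \<in> A \<Longrightarrow> y \<in> A \<Longrightarrow> z \<in> A \<Longrightarrow> x = y \<or> y = z \<or> x = z"
  shows "card A \<le> 2"
proof (cases "A = {}")
  case False
  then obtain x where x: "x \<in> A"
    by blast
  have "card (A - {x}) \<le> Suc 0"
    using assms x by (subst card_le_Suc0_iff_eq) blast+
  then show ?thesis
    using assms(1) x by (simp add: card_Diff_singleton)
qed simp

lemma card_le_twice_chromatic_number: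
  assumes "finite V" "loopless E" "no_independent_triple V E"
  shows "card V \<le> 2 * chromatic_number V E"
proof -
  let ?k = "chromatic_number V E"
  obtain \<gamma> where \<gamma>: "proper_colouring V E {1..?k} \<gamma>"
    using chromatic_number_colouring[OF assms(1,2)] by blast
  have "V = (\<Union>c\<in>{1..?k}. {v\<in>V. \<gamma> v = c})"
    using proper_colouring_in[OF \<gamma>] by auto
  then have "card V \<le> (\<Sum>c\<in>{1..?k}. card {v\<in>V. \<gamma> v = c})"
    by (metis card_UN_le finite_atLeastAtMost)
  also have "\<dots> \<le> (\<Sum>c\<in>{1..?k}. 2)"
  proof (rule sum_mono)
    fix c
    show "card {v\<in>V. \<gamma> v = c} \<le> 2"
      using colour_class_at_most_two[OF assms(3) \<gamma>] assms(1)
      by (intro card_le_two_if_no_three) auto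
  qed
  finally show ?thesis
    by simp
qed

lemma twice_card_colours_le:
  assumes "finite V" "finite L" and \<alpha>: "proper_colouring V E L \<alpha>" and used: "L \<subseteq> \<alpha> ` V"
  shows "2 * card L \<le> card V + card (singletons V \<alpha>)"
proof -
  let ?S = "singletons V \<alpha>" and ?cl = "\<lambda>c. {v\<in>V. \<alpha> v = c}"
  have fin_cl: "finite (?cl c)" for c
    using assms(1) by simp
  have "card V = card (\<Union>c\<in>L. ?cl c)"
    using proper_colouring_in[OF \<alpha>] by (intro arg_cong[where f = card]) auto
  also have "\<dots> = (\<Sum>c\<in>L. card (?cl c))"
    using assms(2) fin_cl by (intro card_UN_disjoint) auto
  finally have card_V: "card V = (\<Sum>c\<in>L. card (?cl c))" .
  have "2 \<le> card (?cl c) + (if c \<in> \<alpha> ` ?S then 1 else 0)" if c: "c \<in> L" for c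
  proof -
    obtain v where v: "v \<in> V" "\<alpha> v = c"
      using used c by blast
    show ?thesis
    proof (cases "v \<in> ?S")
      case True
      then have "?cl c \<noteq> {}"
        using v by blast
      then show ?thesis
        using True v fin_cl[of c] by (auto simp: card_gt_0_iff Suc_le_eq)
    next
      case False
      then obtain w where "w \<in> V" "\<alpha> w = \<alpha> v" "w \<noteq> v"
        using v(1) unfolding singletons_def by blast
      then have "{v, w} \<subseteq> ?cl c"
        using v by auto
      from card_mono[OF fin_cl this] have "2 \<le> card (?cl c)"
        using \<open>w \<noteq> v\<close> by simp
      then show ?thesis
        by simp
    qed
  qed
  then have "(\<Sum>c\<in>L. 2) \<le> (\<Sum>c\<in>L. card (?cl c) + (if c \<in> \<alpha> ` ?S then 1 else 0))"
    by (rule sum_mono)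
  also have "\<dots> = card V + card (L \<inter> \<alpha> ` ?S)"
    using assms(2) card_V by (simp add: sum.distrib sum.If_cases)
  also have "\<dots> \<le> card V + card ?S"
    using assms(1) card_image_le[of ?S \<alpha>] card_mono[of "\<alpha> ` ?S" "L \<inter> \<alpha> ` ?S"]
    unfolding singletons_def by fastforce
  finally show ?thesis
    by (simp add: mult.commute)
qed

text \<open>Combine \<open>2 |L| \<le> |V| + |singletons|\<close> with \<open>|V| \<le> 2 \<chi> < 2 |L|\<close>.\<close>
lemma two_singletons_if_all_colours_used:
  assumes "finite V" "loopless E" "finite L" "no_independent_triple V E"
    and "chromatic_number V E < card L"
    and \<alpha>: "proper_colouring V E L \<alpha>" and used: "L \<subseteq> \<alpha> ` V"
  obtains x x' where "x \<in> singletons V \<alpha>" "x' \<in> singletons V \<alpha>" "x \<noteq> x'"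
proof -
  have "\<not> card (singletons V \<alpha>) \<le> Suc 0"
    using twice_card_colours_le[OF assms(1,3) \<alpha> used] card_le_twice_chromatic_number[OF assms(1,2,4)]
      assms(5) by linarith
  moreover have "finite (singletons V \<alpha>)"
    using assms(1) unfolding singletons_def by simp
  ultimately show thesis
    using that card_le_Suc0_iff_eq by blast
qed

text \<open>Once \<open>c\<close> has joined the class of \<open>x\<close>, its old colour is carried by \<open>d\<close> alone, so \<open>y\<close>
  can take it.\<close>
lemma move_pair_into_singleton_class:
  assumes triple: "no_independent_triple V E" and \<alpha>: "proper_colouring V E L \<alpha>"
    and x: "x \<in> singletons V \<alpha>" and cd: "c \<in> V" "d \<in> V" "c \<noteq> d" "\<alpha> c = \<alpha> d"
    and c: "c \<noteq> x" "{c, x} \<notin> E" "\<alpha> x \<noteq> \<alpha> c"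
    and y: "y \<in> V" "y \<noteq> x" "{y, d} \<notin> E" "\<alpha> y \<noteq> \<alpha> c"
  shows "recolour_reach V E L \<alpha> (\<alpha>(c := \<alpha> x, y := \<alpha> c))"
    and "pair_class V E L (\<alpha>(c := \<alpha> x, y := \<alpha> c)) c x"
proof -
  let ?\<alpha>1 = "\<alpha>(c := \<alpha> x)"
  have r1: "recolour_reach V E L \<alpha> ?\<alpha>1" and p1: "pair_class V E L ?\<alpha>1 c x"
    using update_to_singleton_colour[OF \<alpha> x cd(1) c(1,2)] by blast+
  have \<alpha>1: "proper_colouring V E L ?\<alpha>1"
    using recolour_reach_colouring[OF r1 \<alpha>] .
  have "?\<alpha>1 w \<noteq> \<alpha> c" if w: "w \<in> V" "{y, w} \<in> E" for w
  proof (cases "w = c")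
    case False
    have "w \<noteq> d"
      using w(2) y(3) by blast
    then show ?thesis
      using colour_class_at_most_two[OF triple \<alpha> cd(1) cd(2) w(1)] cd(3,4) False by auto
  qed (use c(3) in simp)
  then have r2: "recolour_reach V E L ?\<alpha>1 (?\<alpha>1(y := \<alpha> c))"
    using recolour_reach_update[OF \<alpha>1 y(1) proper_colouring_in[OF \<alpha> cd(1)]] by blast
  then show "recolour_reach V E L \<alpha> (\<alpha>(c := \<alpha> x, y := \<alpha> c))"
    using r1 by (meson rtranclp_trans)
  show "pair_class V E L (\<alpha>(c := \<alpha> x, y := \<alpha> c)) c x"
    using p1 recolour_reach_colouring[OF r2 \<alpha>1] c(3) y(2,4) unfolding pair_class_def by auto
qed

text \<open>After \<open>c\<close> moves to the class of \<open>x\<close> and \<open>y\<close> to the old colour of \<open>c\<close>, the colour of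
  \<open>y\<close> is spare.\<close>
lemma reach_pair_spare_by_two_moves:
  assumes triple: "no_independent_triple V E" and \<alpha>: "proper_colouring V E L \<alpha>"
    and x: "x \<in> singletons V \<alpha>" and y: "y \<in> singletons V \<alpha>" "y \<noteq> x"
    and cd: "c \<in> V" "d \<in> V" "c \<noteq> d" "\<alpha> c = \<alpha> d"
    and nonadj: "c \<noteq> x" "{c, x} \<notin> E" "{y, d} \<notin> E"
    and colours: "\<alpha> x \<noteq> \<alpha> c" "\<alpha> y \<noteq> \<alpha> c"
  obtains \<sigma> where "recolour_reach V E L \<alpha> \<sigma>" "pair_spare_colouring V E L \<sigma>"
proof -
  have x_only: "\<And>w. w \<in> V \<Longrightarrow> \<alpha> w = \<alpha> x \<Longrightarrow> w = x"
    and yV: "y \<in> V" and y_only: "\<And>w. w \<in> V \<Longrightarrow> \<alpha> w = \<alpha> y \<Longrightarrow> w = y"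
    using x y unfolding singletons_def by auto
  let ?\<sigma> = "\<alpha>(c := \<alpha> x, y := \<alpha> c)"
  note moves = move_pair_into_singleton_class[OF triple \<alpha> x cd nonadj(1,2) colours(1) yV y(2)
      nonadj(3) colours(2)]
  have "?\<sigma> w \<noteq> \<alpha> y" if w: "w \<in> V" for w
  proof -
    consider "w = y" | "w = c" "w \<noteq> y" | "w \<noteq> c" "w \<noteq> y"
      by blast
    then show ?thesis
    proof cases
      case 2
      then show ?thesis
        using x_only[OF yV] y(2) by auto
    next
      case 3
      then show ?thesis
        using y_only[OF w] by auto
    qed (use colours in simp)
  qed
  then have "\<alpha> y \<notin> ?\<sigma> ` V"
    by (metis imageE)
  then have "pair_spare_colouring V E L ?\<sigma>"
    unfolding pair_spare_colouring_def using moves(2) proper_colouring_in[OF \<alpha> yV] by blast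
  then show thesis
    using that moves(1) by blast
qed

text \<open>After \<open>c\<close> moves to the class of \<open>x'\<close> and \<open>e\<close> to the old colour of \<open>c\<close>, the vertex \<open>x\<close>
  can move to the old colour of \<open>e\<close>, which leaves its own colour spare.\<close>
lemma reach_pair_spare_by_three_moves:
  assumes triple: "no_independent_triple V E" and \<alpha>: "proper_colouring V E L \<alpha>"
    and x: "x \<in> singletons V \<alpha>" and x': "x' \<in> singletons V \<alpha>" "x' \<noteq> x"
    and cd: "c \<in> V" "d \<in> V" "c \<noteq> d" "\<alpha> c = \<alpha> d" and ef: "e \<in> V" "f \<in> V" "e \<noteq> f" "\<alpha> e = \<alpha> f"
    and nonadj: "c \<noteq> x'" "{c, x'} \<notin> E" "{e, d} \<notin> E" "{x, f} \<notin> E"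
    and colours: "\<alpha> x \<noteq> \<alpha> c" "\<alpha> x' \<noteq> \<alpha> c" "\<alpha> x \<noteq> \<alpha> e" "\<alpha> x' \<noteq> \<alpha> e" "\<alpha> d \<noteq> \<alpha> e"
  obtains \<sigma> where "recolour_reach V E L \<alpha> \<sigma>" "pair_spare_colouring V E L \<sigma>"
proof -
  have xV: "x \<in> V" and x_only: "\<And>w. w \<in> V \<Longrightarrow> \<alpha> w = \<alpha> x \<Longrightarrow> w = x" and x'V: "x' \<in> V"
    using x x' unfolding singletons_def by auto
  have "c \<noteq> x" "e \<noteq> x'" "\<alpha> e \<noteq> \<alpha> c"
    using colours cd(4) by auto
  let ?\<alpha>2 = "\<alpha>(c := \<alpha> x', e := \<alpha> c)"
  note moves = move_pair_into_singleton_class[OF triple \<alpha> x'(1) cd nonadj(1,2) colours(2) ef(1)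
      \<open>e \<noteq> x'\<close> nonadj(3) \<open>\<alpha> e \<noteq> \<alpha> c\<close>]
  have \<alpha>2: "proper_colouring V E L ?\<alpha>2"
    using recolour_reach_colouring[OF moves(1) \<alpha>] .
  let ?\<alpha>3 = "?\<alpha>2(x := \<alpha> e)"
  have "?\<alpha>2 w \<noteq> \<alpha> e" if w: "w \<in> V" "{x, w} \<in> E" for w
  proof -
    consider "w = e" | "w = c" "w \<noteq> e" | "w \<noteq> c" "w \<noteq> e"
      by blast
    then show ?thesis
    proof cases
      case 3
      have "w \<noteq> f"
        using w(2) nonadj(4) by blast
      then show ?thesis
        using colour_class_at_most_two[OF triple \<alpha> ef(1) ef(2) w(1)] ef(3,4) 3 by auto
    qed (use colours cd(4) in auto)
  qed
  then have r3: "recolour_reach V E L ?\<alpha>2 ?\<alpha>3"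
    using recolour_reach_update[OF \<alpha>2 xV proper_colouring_in[OF \<alpha> ef(1)]] by blast
  have p3: "pair_class V E L ?\<alpha>3 c x'"
    using moves(2) recolour_reach_colouring[OF r3 \<alpha>2] colours \<open>c \<noteq> x\<close> x'(2)
    unfolding pair_class_def by auto
  have "?\<alpha>3 w \<noteq> \<alpha> x" if w: "w \<in> V" for w
  proof -
    consider "w = x" | "w = e" "w \<noteq> x" | "w = c" "w \<noteq> x" "w \<noteq> e" | "w \<noteq> x" "w \<noteq> e" "w \<noteq> c"
      by blast
    then show ?thesis
    proof cases
      case 3
      then show ?thesis
        using x_only[OF x'V] x'(2) by auto
    next
      case 4
      then show ?thesis
        using x_only[OF w] by auto
    qed (use colours in auto)
  qed
  then have "\<alpha> x \<notin> ?\<alpha>3 ` V"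
    by (metis imageE)
  then have "pair_spare_colouring V E L ?\<alpha>3"
    unfolding pair_spare_colouring_def using p3 proper_colouring_in[OF \<alpha> xV] by blast
  then show thesis
    using that moves(1) r3 by (meson rtranclp_trans)
qed

section \<open>Clique blowups of the five-cycle\<close>

lemma C5_near_no_far_triple:
  "i < 5 \<Longrightarrow> j < 5 \<Longrightarrow> k < 5 \<Longrightarrow> \<not> C5_near i j \<Longrightarrow> \<not> C5_near j k \<Longrightarrow> \<not> C5_near i k \<Longrightarrow> False"
  by (drule below_5_cases)+ (unfold C5_near_def, elim disjE; simp)

lemma C5_near_far_pair:
  "j < 5 \<Longrightarrow> k < 5 \<Longrightarrow> k' < 5 \<Longrightarrow> k \<noteq> j \<Longrightarrow> k \<noteq> (j + 1) mod 5 \<Longrightarrow> k' \<noteq> j \<Longrightarrow>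
    k' \<noteq> (j + 1) mod 5 \<Longrightarrow> \<not> C5_near k k' \<Longrightarrow>
    k = (j + 2) mod 5 \<and> k' = (j + 4) mod 5 \<or> k = (j + 4) mod 5 \<and> k' = (j + 2) mod 5"
  by (drule below_5_cases)+ (unfold C5_near_def, elim disjE; simp)

lemma C5_near_both:
  "k < 5 \<Longrightarrow> j < 5 \<Longrightarrow> C5_near k j \<Longrightarrow> C5_near k ((j + 1) mod 5) \<Longrightarrow> k \<in> {j, (j + 1) mod 5}"
  by (drule below_5_cases)+ (unfold C5_near_def, elim disjE; simp)

lemma C5_near_positions:
  assumes "j < 5"
  shows "C5_near j ((j + 1) mod 5)" "C5_near ((j + 1) mod 5) j"
    "\<not> C5_near ((j + 2) mod 5) j" "\<not> C5_near ((j + 1) mod 5) ((j + 4) mod 5)"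
    "\<not> C5_near j ((j + 3) mod 5)"
    "((j + 4) mod 5 + 1) mod 5 = j" "((j + 4) mod 5 + 2) mod 5 = (j + 1) mod 5"
    "((j + 4) mod 5 + 4) mod 5 = (j + 3) mod 5" "(j + 1) mod 5 \<noteq> j"
  using below_5_cases[OF assms] unfolding C5_near_def by (elim disjE; simp)+

locale C5_blowup_colours =
  fixes V :: "'a set" and E :: "'a set set" and L :: "nat set" and q :: "'a \<Rightarrow> nat"
  assumes finite_vertices: "finite V" and loopless: "loopless E" and finite_colours: "finite L"
    and many_colours: "chromatic_number V E < card L" and blowup: "C5_blowup V E q"
begin

lemma position: "v \<in> V \<Longrightarrow> q v < 5"
  using blowup unfolding C5_blowup_def by blast

lemma adj_iff_near: "x \<in> V \<Longrightarrow> y \<in> V \<Longrightarrow> x \<noteq> y \<Longrightarrow> {x, y} \<in> E \<longleftrightarrow> C5_near (q x) (q y)"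
  using blowup unfolding C5_blowup_def by blast

lemma no_independent_triple: "no_independent_triple V E"
  unfolding no_independent_triple_def
  using C5_near_no_far_triple position adj_iff_near by metis

lemma consecutive_positions_clique:
  assumes "j < 5" "x \<in> V" "y \<in> V" "x \<noteq> y" "q x \<in> {j, (j + 1) mod 5}" "q y \<in> {j, (j + 1) mod 5}"
  shows "{x, y} \<in> E"
proof -
  from assms(5,6) consider "q x = q y" | "q x = j" "q y = (j + 1) mod 5" | "q x = (j + 1) mod 5" "q y = j"
    by auto
  then have "C5_near (q x) (q y)"
    by cases (use C5_near_positions(1,2)[OF assms(1)] in \<open>simp_all add: C5_near_def\<close>)
  then show ?thesis
    using adj_iff_near[OF assms(2-4)] by simp
qed

text \<open>A colour missing on the clique at positions \<open>j, j + 1\<close> is not the colour of a singleton,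
  so its class is a non-adjacent pair outside that clique, necessarily at positions \<open>j + 2\<close>
  and \<open>j + 4\<close>.\<close>
lemma far_pair_class:
  assumes \<alpha>: "proper_colouring V E L \<alpha>" and used: "L \<subseteq> \<alpha> ` V" and j: "j < 5"
    and singletons: "\<And>s. s \<in> singletons V \<alpha> \<Longrightarrow> q s \<in> {j, (j + 1) mod 5}"
  obtains c d where "c \<in> V" "d \<in> V" "c \<noteq> d" "\<alpha> c = \<alpha> d"
    "\<And>v. v \<in> V \<Longrightarrow> q v \<in> {j, (j + 1) mod 5} \<Longrightarrow> \<alpha> v \<noteq> \<alpha> c"
    "q c = (j + 2) mod 5" "q d = (j + 4) mod 5"
proof -
  let ?K = "{v\<in>V. q v \<in> {j, (j + 1) mod 5}}"
  obtain a where a: "a \<in> L" "a \<notin> \<alpha> ` ?K"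
    using clique_misses_colour[OF finite_vertices loopless finite_colours many_colours \<alpha>, of ?K]
      consecutive_positions_clique[OF j] by blast
  obtain c where c: "c \<in> V" "\<alpha> c = a"
    using used a(1) by blast
  have outside: "q v \<notin> {j, (j + 1) mod 5}" if "v \<in> V" "\<alpha> v = a" for v
    using a(2) that by (metis (mono_tags, lifting) image_eqI mem_Collect_eq)
  then have "c \<notin> singletons V \<alpha>"
    using singletons c by blast
  then obtain d where d: "d \<in> V" "d \<noteq> c" "\<alpha> d = \<alpha> c"
    using c(1) unfolding singletons_def by blast
  have "{c, d} \<notin> E"
    using proper_colouring_adj[OF \<alpha> c(1) d(1)] d(3) by auto
  then have "\<not> C5_near (q c) (q d)"
    using adj_iff_near[OF c(1) d(1)] d(2) by auto
  then have "q c = (j + 2) mod 5 \<and> q d = (j + 4) mod 5 \<or> q c = (j + 4) mod 5 \<and> q d = (j + 2) mod 5"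
    using C5_near_far_pair[OF j position[OF c(1)] position[OF d(1)]] outside[of c] outside[of d] c d
    by simp
  moreover have avoid: "\<alpha> v \<noteq> \<alpha> c" if "v \<in> V" "q v \<in> {j, (j + 1) mod 5}" for v
    using outside[of v] that c(2) by blast
  ultimately show thesis
  proof (elim disjE conjE)
    assume "q c = (j + 2) mod 5" "q d = (j + 4) mod 5"
    then show thesis
      using that[OF c(1) d(1) d(2)[symmetric] d(3)[symmetric] avoid] by blast
  next
    assume "q c = (j + 4) mod 5" "q d = (j + 2) mod 5"
    then show thesis
      using that[OF d(1) c(1) d(2) d(3)] avoid d(3) by simp
  qed
qed

lemma far_positions_nonadj:
  assumes "x \<in> V" "y \<in> V" "\<not> C5_near (q x) (q y)"
  shows "x \<noteq> y" "{x, y} \<notin> E"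
  using assms adj_iff_near[OF assms(1,2)] by (auto simp: C5_near_def)

lemma singletons_near:
  assumes "\<And>x y. x \<in> singletons V \<alpha> \<Longrightarrow> y \<in> singletons V \<alpha> \<Longrightarrow> x \<noteq> y \<Longrightarrow> {x, y} \<in> E"
    and "s \<in> singletons V \<alpha>" "t \<in> singletons V \<alpha>"
  shows "C5_near (q s) (q t)"
  using assms adj_iff_near[of s t] unfolding singletons_def by (cases "s = t") (auto simp: C5_near_def)

lemma reach_pair_spare_consecutive_singletons:
  assumes \<alpha>: "proper_colouring V E L \<alpha>" and used: "L \<subseteq> \<alpha> ` V"
    and sing_clique: "\<And>x y. x \<in> singletons V \<alpha> \<Longrightarrow> y \<in> singletons V \<alpha> \<Longrightarrow> x \<noteq> y \<Longrightarrow> {x, y} \<in> E"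
    and x: "x \<in> singletons V \<alpha>" and y: "y \<in> singletons V \<alpha>" and xy: "q y = (q x + 1) mod 5"
  obtains \<sigma> where "recolour_reach V E L \<alpha> \<sigma>" "pair_spare_colouring V E L \<sigma>"
proof -
  define j where "j = q x"
  have xV: "x \<in> V" and yV: "y \<in> V"
    using x y unfolding singletons_def by auto
  have j: "j < 5"
    unfolding j_def using position[OF xV] .
  note nf = C5_near_positions[OF j]
  have "q s \<in> {j, (j + 1) mod 5}" if "s \<in> singletons V \<alpha>" for s
    using C5_near_both[OF position j] singletons_near[OF sing_clique that x]
      singletons_near[OF sing_clique that y] that xy unfolding j_def singletons_def by auto
  then obtain c d where cd: "c \<in> V" "d \<in> V" "c \<noteq> d" "\<alpha> c = \<alpha> d"
    "\<And>v. v \<in> V \<Longrightarrow> q v \<in> {j, (j + 1) mod 5} \<Longrightarrow> \<alpha> v \<noteq> \<alpha> c"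
    "q c = (j + 2) mod 5" "q d = (j + 4) mod 5"
    using far_pair_class[OF \<alpha> used j] by blast
  have "\<not> C5_near (q c) (q x)" "\<not> C5_near (q y) (q d)"
    using nf(3,4) cd(6,7) xy unfolding j_def by simp_all
  then have "c \<noteq> x" "{c, x} \<notin> E" "{y, d} \<notin> E"
    using far_positions_nonadj[OF cd(1) xV] far_positions_nonadj[OF yV cd(2)] by blast+
  moreover have "\<alpha> x \<noteq> \<alpha> c" "\<alpha> y \<noteq> \<alpha> c"
    using cd(5)[OF xV] cd(5)[OF yV] xy unfolding j_def by auto
  moreover have "y \<noteq> x"
    using xy nf(9) unfolding j_def by auto
  ultimately show thesis
    using reach_pair_spare_by_two_moves[OF no_independent_triple \<alpha> x y _ cd(1-4)] that by blast
qed

lemma reach_pair_spare_same_position_singletons: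
  assumes \<alpha>: "proper_colouring V E L \<alpha>" and used: "L \<subseteq> \<alpha> ` V"
    and x: "x \<in> singletons V \<alpha>" and x': "x' \<in> singletons V \<alpha>" "x' \<noteq> x"
    and same: "\<And>s. s \<in> singletons V \<alpha> \<Longrightarrow> q s = q x"
  obtains \<sigma> where "recolour_reach V E L \<alpha> \<sigma>" "pair_spare_colouring V E L \<sigma>"
proof -
  define j where "j = q x"
  have xV: "x \<in> V" and x'V: "x' \<in> V"
    using x x' unfolding singletons_def by auto
  have j: "j < 5" and j4: "(j + 4) mod 5 < 5"
    unfolding j_def using position[OF xV] by simp_all
  note nf = C5_near_positions[OF j]
  have sing_j: "q s \<in> {j, (j + 1) mod 5}"
    and sing_j4: "q s \<in> {(j + 4) mod 5, ((j + 4) mod 5 + 1) mod 5}" if "s \<in> singletons V \<alpha>" for s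
    using same[OF that] nf(6) unfolding j_def by simp_all
  obtain c d where cd: "c \<in> V" "d \<in> V" "c \<noteq> d" "\<alpha> c = \<alpha> d"
    "\<And>v. v \<in> V \<Longrightarrow> q v \<in> {j, (j + 1) mod 5} \<Longrightarrow> \<alpha> v \<noteq> \<alpha> c"
    "q c = (j + 2) mod 5" "q d = (j + 4) mod 5"
    using far_pair_class[OF \<alpha> used j sing_j] by blast
  obtain e f where ef: "e \<in> V" "f \<in> V" "e \<noteq> f" "\<alpha> e = \<alpha> f"
    "\<And>v. v \<in> V \<Longrightarrow> q v \<in> {(j + 4) mod 5, j} \<Longrightarrow> \<alpha> v \<noteq> \<alpha> e"
    "q e = (j + 1) mod 5" "q f = (j + 3) mod 5"
    using far_pair_class[OF \<alpha> used j4 sing_j4] unfolding nf(6-8) by blast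
  have "\<not> C5_near (q c) (q x')" "\<not> C5_near (q e) (q d)" "\<not> C5_near (q x) (q f)"
    using nf(3-5) cd(6,7) ef(6,7) same[OF x'(1)] C5_near_def unfolding j_def by auto
  then have "c \<noteq> x'" "{c, x'} \<notin> E" "{e, d} \<notin> E" "{x, f} \<notin> E"
    using far_positions_nonadj[OF cd(1) x'V] far_positions_nonadj[OF ef(1) cd(2)]
      far_positions_nonadj[OF xV ef(2)] by blast+
  moreover have "\<alpha> x \<noteq> \<alpha> c" "\<alpha> x' \<noteq> \<alpha> c" "\<alpha> x \<noteq> \<alpha> e" "\<alpha> x' \<noteq> \<alpha> e" "\<alpha> d \<noteq> \<alpha> e"
    using cd(5)[OF xV] cd(5)[OF x'V] ef(5)[OF xV] ef(5)[OF x'V] ef(5)[OF cd(2)] cd(7) nf(6)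
      same[OF x'(1)] unfolding j_def by auto
  ultimately show thesis
    using reach_pair_spare_by_three_moves[OF no_independent_triple \<alpha> x x' cd(1-4) ef(1-4)] that
    by blast
qed

lemma reach_pair_spare_colouring:
  assumes noncomplete: "x \<in> V" "y \<in> V" "x \<noteq> y" "{x, y} \<notin> E"
    and \<alpha>: "proper_colouring V E L \<alpha>"
  obtains \<sigma> where "recolour_reach V E L \<alpha> \<sigma>" "pair_spare_colouring V E L \<sigma>"
proof (cases "L \<subseteq> \<alpha> ` V")
  case False
  then obtain b where "b \<in> L" "b \<notin> \<alpha> ` V"
    by blast
  then show thesis
    by (rule reach_pair_spare_if_spare_colour[OF no_independent_triple \<alpha> _ _ noncomplete]) (rule that)
next
  case used: True
  let ?S = "singletons V \<alpha>"
  show thesis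
  proof (cases "\<exists>s\<in>?S. \<exists>t\<in>?S. s \<noteq> t \<and> {s, t} \<notin> E")
    case True
    then show thesis
      using reach_pair_spare_if_singletons_nonadjacent[OF \<alpha>] that by blast
  next
    case False
    then have clique: "\<And>s t. s \<in> ?S \<Longrightarrow> t \<in> ?S \<Longrightarrow> s \<noteq> t \<Longrightarrow> {s, t} \<in> E"
      by blast
    obtain s0 s1 where s01: "s0 \<in> ?S" "s1 \<in> ?S" "s0 \<noteq> s1"
      using two_singletons_if_all_colours_used[OF finite_vertices loopless finite_colours
          no_independent_triple many_colours \<alpha> used] .
    show thesis
    proof (cases "\<exists>s\<in>?S. \<exists>t\<in>?S. q t = (q s + 1) mod 5")
      case True
      then show thesis
        using reach_pair_spare_consecutive_singletons[OF \<alpha> used clique] that by blast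
    next
      case False
      have "q s = q s0" if "s \<in> ?S" for s
      proof -
        have "C5_near (q s) (q s0)"
          using singletons_near[of \<alpha> s s0] clique that s01(1) by blast
        then show ?thesis
          using False that s01(1) unfolding C5_near_def by (metis (no_types, lifting))
      qed
      then show thesis
        using reach_pair_spare_same_position_singletons[OF \<alpha> used s01(1,2)] s01(3) that by metis
    qed
  qed
qed

lemma recolour_connected_C5_blowup:
  assumes noncomplete: "x \<in> V" "y \<in> V" "x \<noteq> y" "{x, y} \<notin> E"
    and mixing: "\<And>R. R \<subset> V \<Longrightarrow> mixing R E"
  shows "recolour_connected V E L"
  unfolding recolour_connected_def
proof (intro allI impI)
  fix \<alpha> \<beta> assume "proper_colouring V E L \<alpha>" "proper_colouring V E L \<beta>"
  then obtain \<sigma> \<tau> where "recolour_reach V E L \<alpha> \<sigma>" "pair_spare_colouring V E L \<sigma>"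
    "recolour_reach V E L \<beta> \<tau>" "pair_spare_colouring V E L \<tau>"
    using reach_pair_spare_colouring[OF noncomplete] by metis
  moreover have "recolour_reach V E L \<sigma> \<tau>"
    using recolour_reach_pair_spare_colourings[OF finite_vertices loopless finite_colours mixing]
      calculation(2,4) by blast
  ultimately show "recolour_reach V E L \<alpha> \<beta>"
    by (meson recolour_reach_sym rtranclp_trans)
qed

end

lemma mixing_C5_blowup:
  assumes "finite V" "loopless E" "C5_blowup V E q"
    and "x \<in> V" "y \<in> V" "x \<noteq> y" "{x, y} \<notin> E"
    and "\<And>R. R \<subset> V \<Longrightarrow> mixing R E"
  shows "mixing V E"
  unfolding mixing_def
proof (intro allI impI)
  fix L :: "nat set" assume "finite L" "chromatic_number V E < card L"
  then interpret C5_blowup_colours V E L q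
    using assms(1-3) by unfold_locales
  show "recolour_connected V E L"
    using recolour_connected_C5_blowup assms(4-8) by blast
qed

theorem mixing_if_P5_C4_free:
  assumes "finite V" "loopless E" "P5_C4_free V E"
  shows "mixing V E"
  using assms
proof (induction "card V" arbitrary: V rule: less_induct)
  case less
  interpret P5_C4_free_graph V E
    using less.prems by unfold_locales
  have mixing_proper: "mixing R E" if "R \<subset> V" for R
  proof -
    have "card R < card V"
      by (rule psubset_card_mono[OF less.prems(1) that])
    moreover have "finite R" "P5_C4_free R E"
      using that less.prems(1) P5_C4_free_subset[OF less.prems(3)] finite_subset by blast+
    ultimately show ?thesis
      using less.hyps less.prems(2) by blast
  qed
  show ?case
  proof (cases "2 \<le> card V")
    case False
    then have "card V \<le> Suc 0"
      by simp
    then obtain u where "V \<subseteq> {u}"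
      using card_le_Suc0_iff_eq[OF less.prems(1)] by blast
    then show ?thesis
      unfolding mixing_def using recolour_connected_subsingleton[of V u E] by blast
  next
    case True
    then consider B Y where "clique_split V E B Y"
      | q x y where "C5_blowup V E q" "x \<in> V" "y \<in> V" "x \<noteq> y" "{x, y} \<notin> E"
      using clique_split_or_C5_blowup by blast
    then show ?thesis
    proof cases
      case (1 B Y)
      then have "B \<subset> V" "V - B \<subset> V"
        unfolding clique_split_def by auto
      then show ?thesis
        using mixing_clique_split[OF less.prems(1,2) 1] mixing_proper by blast
    next
      case (2 q x y)
      then show ?thesis
        using mixing_C5_blowup[OF less.prems(1,2)] mixing_proper by blast
    qed
  qed
qed

theorem theorem8:
  fixes V :: "'a set" and E :: "'a set set" and l :: nat
  assumes "simple_graph V E"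
    and "P5_C4_free V E"
    and "l \<ge> chromatic_number V E + 1"
  shows "reconf_connected V E l"
proof -
  have "finite V" "loopless E"
    using assms(1) unfolding simple_graph_def loopless_def by fastforce+
  then have "mixing V E"
    using mixing_if_P5_C4_free assms(2) by blast
  then have "recolour_connected V E {1..l}"
    using assms(3) unfolding mixing_def by simp
  then show ?thesis
    unfolding reconf_connected_def colourings_eq recolour_connected_def
    using recolour_reach_path by blast
qed

end
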